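(* Let $n\ge1$, $b\ge1$. Let $\mu_1,\mu_2,\dots$ be i.i.d. random elements of $B_n$ with law $Q^B_{2b+1}$, and set $\tau_0=\mathrm{id}$, $\tau_r=\tau_{r-1}\circ\mu_r$ (the result of $r$ successive $(2b+1)$-shuffles). Then $(d(\tau_r^{-1}))_{r\ge0}$ is a Markov chain on $\{0,\dots,n\}$ with stationary distribution $\pi(j)=\overline{A(n,j)}/(2^nn!)$, and its transition matrix $K$ satisfies $K(i,j)=\pi(j)P(j,i)/\pi(i)$, where $P$ is the transition matrix of the type $B$ base-$(2b+1)$ carries chain; i.e. its formal time reversal with respect to $\pi$ is the type $B$ carries chain.
   Context: $B_n$ is the group of signed permutations (bijections $\sigma$ of $\{\pm1,\dots,\pm n\}$ with $\sigma(-i)=-\sigma(i)$), composed as functions. With the order $1<2<\dots<n<-n<\dots<-1$, $\sigma$ has a descent at $i$ ($1\le i\le n-1$) if $\sigma(i)>\sigma(i+1)$ and at $n$ if $\sigma(n)<0$; $d(\sigma)$ is the number of descents and $\overline{A(n,j)}$ the number of $\sigma\in B_n$ with $j$ descents. Binomial convention: $\binom{m}{n}=0$ if $m<n$. The type $B$ $(2b+1)$-shuffle measure (cut multinomially into $2b+1$ piles, flip the even-numbered piles, riffle) is $Q^B_{2b+1}(\tau)=\binom{n+b-d(\tau^{-1})}{n}/(2b+1)^n$; a $(2a+1)$-shuffle followed by a $(2b+1)$-shuffle has law $Q^B_{(2a+1)(2b+1)}$. The type $B$ base-$(2b+1)$ carries chain is the Markov chain on $\{0,\dots,n\}$ with $\kappa_0=0$,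 $\kappa_{t+1}=\lfloor(\kappa_t+b+X_{t+1,1}+\dots+X_{t+1,n})/(2b+1)\rfloor$, $X_{t,k}$ i.i.d. uniform on $\{0,\dots,2b\}$. *)

theory Defs
  imports Complex_Main "HOL-Combinatorics.Permutations"
begin

text \<open>Signed permutations of [n]: bijections of {+-1,...,+-n} (extended by the
identity elsewhere, in particular fixing 0) with sigma(-i) = -sigma(i).\<close>
definition signed_perms :: "nat \<Rightarrow> (int \<Rightarrow> int) set" where
  "signed_perms n = {\<sigma>. \<sigma> permutes {i::int. 1 \<le> \<bar>i\<bar> \<and> \<bar>i\<bar> \<le> int n}
                        \<and> (\<forall>i. \<sigma> (- i) = - \<sigma> i)}"

text \<open>Rank in the order 1 < 2 < ... < n < -n < ... < -1.\<close>
definition brank :: "nat \<Rightarrow> int \<Rightarrow> int" where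
  "brank n x = (if x > 0 then x else 2 * int n + 1 + x)"

definition bdescents :: "nat \<Rightarrow> (int \<Rightarrow> int) \<Rightarrow> nat set" where
  "bdescents n \<sigma> =
     {i. 1 \<le> i \<and> i \<le> n - 1 \<and> brank n (\<sigma> (int i)) > brank n (\<sigma> (int i + 1))}
     \<union> {i. i = n \<and> \<sigma> (int n) < 0}"

definition bdes :: "nat \<Rightarrow> (int \<Rightarrow> int) \<Rightarrow> nat" where
  "bdes n \<sigma> = card (bdescents n \<sigma>)"

definition eulerB :: "nat \<Rightarrow> nat \<Rightarrow> nat" where
  "eulerB n j = card {\<sigma> \<in> signed_perms n. bdes n \<sigma> = j}"

definition shuffleB :: "nat \<Rightarrow> nat \<Rightarrow> (int \<Rightarrow> int) \<Rightarrow> real" where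
  "shuffleB n b \<tau> = real ((n + b - bdes n (inv \<tau>)) choose n) / real (2 * b + 1) ^ n"

fun shuffle_prod :: "(nat \<Rightarrow> int \<Rightarrow> int) \<Rightarrow> nat \<Rightarrow> int \<Rightarrow> int" where
  "shuffle_prod \<mu> 0 = id"
| "shuffle_prod \<mu> (Suc r) = shuffle_prod \<mu> r \<circ> \<mu> (Suc r)"

text \<open>Probability that d(tau_k^{-1}) = s k for all k = 0..r, when mu_1,...,mu_r are
i.i.d. with law shuffleB n b.\<close>
definition path_prob :: "nat \<Rightarrow> nat \<Rightarrow> nat \<Rightarrow> (nat \<Rightarrow> nat) \<Rightarrow> real" where
  "path_prob n b r s =
     (\<Sum>\<mu> \<in> PiE {1..r} (\<lambda>_. signed_perms n).
        (\<Prod>k\<in>{1..r}. shuffleB n b (\<mu> k)) *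
        (if \<forall>k\<le>r. bdes n (inv (shuffle_prod \<mu> k)) = s k then 1 else 0))"

definition piB :: "nat \<Rightarrow> nat \<Rightarrow> real" where
  "piB n j = real (eulerB n j) / (2 ^ n * fact n)"

definition carriesB :: "nat \<Rightarrow> nat \<Rightarrow> nat \<Rightarrow> nat \<Rightarrow> real" where
  "carriesB n b i j =
     real (card {X \<in> PiE {1..n} (\<lambda>_. {0..2*b}).
                  (i + b + (\<Sum>k\<in>{1..n}. X k)) div (2 * b + 1) = j})
     / real (2 * b + 1) ^ n"

end

theory Submission
  imports Defs
begin

(* The proof models one shuffle combinatorially.  A labeling h : {1..n} -> {-b..b} puts card k on
   pile h k (negative piles are the flipped ones); extending h oddly to the cards -n..-1 and sorting
   the ground set {+-1..+-n} by (label descending, position) yields a signed permutation riffle h.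
   (1) For a fixed rho, the descents of riffle h o rho are exactly the "carry events" of the label
       sequence of h read through rho; the map carry_digits turns labelings bijectively into digit
       vectors X in {0..2b}^n so that the number of events is (d(rho) + b + sum X) div (2b+1).
   (2) Taking rho = psi^-1, riffle h = psi for exactly C(n+b-d(psi^-1), n) labelings (stars and
       bars), so the uniform labeling pushes forward to the shuffle measure Q^B_{2b+1}.
   (3) Hence sum_nu Q(nu) [d(nu^-1 rho) = i] depends on rho only through d(rho) and equals the
       carries transition probability P(d(rho), i).  By induction on r, the weight of a path of
       descent values ending in tau depends only on d(tau^-1), which yields the Markov property.
   (4) Row sums, stationarity and normalisation of pi follow by counting fibres, using the
       carries row sums and |B_n| = 2^n n!. *)

section \<open>The ground set and signed permutations\<close>

abbreviation ground :: "nat \<Rightarrow> int set" where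
  "ground n \<equiv> {i::int. 1 \<le> \<bar>i\<bar> \<and> \<bar>i\<bar> \<le> int n}"

lemma ground_eq: "ground n = {-int n..-1} \<union> {1..int n}"
  by auto

lemma finite_ground [simp]: "finite (ground n)"
  by (simp add: ground_eq)

lemma finite_ground_filter [simp]: "finite {y. 1 \<le> \<bar>y\<bar> \<and> \<bar>y\<bar> \<le> int n \<and> P y}"
  by (rule finite_subset[OF _ finite_ground]) auto

lemma card_ground: "card (ground n) = 2 * n"
proof -
  have "card (ground n) = card {-int n..-1} + card {1..int n}"
    unfolding ground_eq by (rule card_Un_disjoint) auto
  thus ?thesis by simp
qed

lemma int_in_ground: "1 \<le> k \<Longrightarrow> k \<le> n \<Longrightarrow> int k \<in> ground n"
  by auto

lemma abs_in_ground: "x \<in> ground n \<Longrightarrow> \<bar>x\<bar> \<in> {1..int n}"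
  by auto

lemma card_uminus_image: "card (uminus ` A) = card (A :: int set)"
  by (rule card_image) (simp add: inj_on_def)

lemma sperm_permutes: "\<sigma> \<in> signed_perms n \<Longrightarrow> \<sigma> permutes ground n"
  unfolding signed_perms_def by blast

lemma sperm_odd: "\<sigma> \<in> signed_perms n \<Longrightarrow> \<sigma> (- x) = - \<sigma> x"
  unfolding signed_perms_def by blast

lemma sperm_in: "\<sigma> \<in> signed_perms n \<Longrightarrow> x \<in> ground n \<Longrightarrow> \<sigma> x \<in> ground n"
  by (rule iffD2[OF permutes_in_image[OF sperm_permutes]])

lemma sperm_out: "\<sigma> \<in> signed_perms n \<Longrightarrow> x \<notin> ground n \<Longrightarrow> \<sigma> x = x"
  by (rule permutes_not_in[OF sperm_permutes])

lemma sperm_bij: "\<sigma> \<in> signed_perms n \<Longrightarrow> bij \<sigma>"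
  by (rule permutes_bij[OF sperm_permutes])

lemma sperm_inv_l [simp]: "\<sigma> \<in> signed_perms n \<Longrightarrow> inv \<sigma> (\<sigma> x) = x"
  by (rule permutes_inverses(2)[OF sperm_permutes])

lemma sperm_inv_r [simp]: "\<sigma> \<in> signed_perms n \<Longrightarrow> \<sigma> (inv \<sigma> x) = x"
  by (rule permutes_inverses(1)[OF sperm_permutes])

lemma sperm_inv_inv [simp]: "\<sigma> \<in> signed_perms n \<Longrightarrow> inv (inv \<sigma>) = \<sigma>"
  using sperm_bij inv_inv_eq by blast

lemma sperm_intro:
  assumes "inj_on \<sigma> (ground n)" and "\<And>x. x \<in> ground n \<Longrightarrow> \<sigma> x \<in> ground n"
    and "\<And>x. x \<notin> ground n \<Longrightarrow> \<sigma> x = x" and "\<And>x. \<sigma> (- x) = - \<sigma> x"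
  shows "\<sigma> \<in> signed_perms n"
proof -
  have "\<sigma> ` ground n = ground n"
    by (rule card_subset_eq) (use assms(1,2) in \<open>auto simp: card_image\<close>)
  hence "bij_betw \<sigma> (ground n) (ground n)" using assms(1) by (simp add: bij_betw_def)
  thus ?thesis unfolding signed_perms_def using bij_imp_permutes assms(3,4) by blast
qed

lemma sperm_id [simp]: "id \<in> signed_perms n"
  unfolding signed_perms_def using permutes_id by auto

lemma sperm_inv: assumes "\<sigma> \<in> signed_perms n" shows "inv \<sigma> \<in> signed_perms n"
proof -
  have "inv \<sigma> (- x) = - inv \<sigma> x" for x
  proof -
    have "\<sigma> (- inv \<sigma> x) = - x" using sperm_odd[OF assms, of "inv \<sigma> x"] assms by simp
    hence "inv \<sigma> (\<sigma> (- inv \<sigma> x)) = inv \<sigma> (- x)" by simp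
    thus ?thesis using assms by simp
  qed
  moreover have "inv \<sigma> permutes ground n" using assms permutes_inv sperm_permutes by blast
  ultimately show ?thesis unfolding signed_perms_def by blast
qed

lemma sperm_comp:
  "\<sigma> \<in> signed_perms n \<Longrightarrow> \<tau> \<in> signed_perms n \<Longrightarrow> \<sigma> \<circ> \<tau> \<in> signed_perms n"
  unfolding signed_perms_def using permutes_compose by (simp del: abs_le_iff) blast

lemma sperm_inv_comp:
  "\<sigma> \<in> signed_perms n \<Longrightarrow> \<tau> \<in> signed_perms n \<Longrightarrow> inv (\<sigma> \<circ> \<tau>) = inv \<tau> \<circ> inv \<sigma>"
  using sperm_bij o_inv_distrib by blast

lemma sperm_comp_inv_cancel: "\<tau> \<in> signed_perms n \<Longrightarrow> inv \<tau> \<circ> (\<tau> \<circ> \<nu>) = \<nu>"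
  by (simp add: fun_eq_iff)

lemma sperm_comp_inv_cancel': "\<tau> \<in> signed_perms n \<Longrightarrow> \<tau> \<circ> (inv \<tau> \<circ> \<nu>) = \<nu>"
  by (simp add: fun_eq_iff)

lemma finite_sperms [simp]: "finite (signed_perms n)"
proof -
  have "signed_perms n \<subseteq> {p. p permutes ground n}" unfolding signed_perms_def by blast
  moreover have "finite {p. p permutes ground n}" by (rule finite_permutations) simp
  ultimately show ?thesis by (rule finite_subset)
qed

section \<open>The order of B_n\<close>

text \<open>A signed permutation is determined by the permutation |sigma| of {1..n} and the signs of
  sigma on {1..n}; this gives |B_n| = 2^n n!.\<close>

definition sperm_of :: "nat \<Rightarrow> (int \<Rightarrow> int) \<times> (int \<Rightarrow> int) \<Rightarrow> int \<Rightarrow> int" where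
  "sperm_of n pe x = (if x \<in> ground n then sgn x * snd pe \<bar>x\<bar> * fst pe \<bar>x\<bar> else x)"

definition sperm_split :: "nat \<Rightarrow> (int \<Rightarrow> int) \<Rightarrow> (int \<Rightarrow> int) \<times> (int \<Rightarrow> int)" where
  "sperm_split n \<sigma> =
     ((\<lambda>x. if x \<in> {1..int n} then \<bar>\<sigma> x\<bar> else x), restrict (\<lambda>x. sgn (\<sigma> x)) {1..int n})"

abbreviation abs_perms :: "nat \<Rightarrow> (int \<Rightarrow> int) set" where
  "abs_perms n \<equiv> {p. p permutes {1..int n}}"

abbreviation sign_vecs :: "nat \<Rightarrow> (int \<Rightarrow> int) set" where
  "sign_vecs n \<equiv> PiE {1..int n} (\<lambda>_. {-1, 1::int})"

lemma sperm_split_fst: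
  assumes \<sigma>: "\<sigma> \<in> signed_perms n"
  shows "fst (sperm_split n \<sigma>) \<in> abs_perms n"
proof -
  let ?p = "fst (sperm_split n \<sigma>)" and ?q = "fst (sperm_split n (inv \<sigma>))"
  have p: "?p x = \<bar>\<sigma> x\<bar>" if "x \<in> {1..int n}" for x using that by (simp add: sperm_split_def)
  have q: "?q x = \<bar>inv \<sigma> x\<bar>" if "x \<in> {1..int n}" for x using that by (simp add: sperm_split_def)
  have pin: "?p x \<in> {1..int n}" if "x \<in> {1..int n}" for x
    using p[OF that] abs_in_ground[OF sperm_in[OF \<sigma>, of x]] that by simp
  have qin: "?q x \<in> {1..int n}" if "x \<in> {1..int n}" for x
    using q[OF that] abs_in_ground[OF sperm_in[OF sperm_inv[OF \<sigma>], of x]] that by simp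
  have abs_odd: "\<bar>f \<bar>y\<bar>\<bar> = \<bar>f y\<bar>" if "f \<in> signed_perms n" for f y
    using sperm_odd[OF that, of y] by (cases "y \<ge> 0") auto
  have "bij_betw ?p {1..int n} {1..int n}"
  proof (rule bij_betw_byWitness[where f'="?q"])
    show "\<forall>x\<in>{1..int n}. ?q (?p x) = x"
      using q pin p abs_odd[OF sperm_inv[OF \<sigma>]] \<sigma> by auto
    show "\<forall>x\<in>{1..int n}. ?p (?q x) = x"
      using p qin q abs_odd[OF \<sigma>] \<sigma> by auto
  qed (use pin qin in auto)
  moreover have "\<And>x. x \<notin> {1..int n} \<Longrightarrow> ?p x = x" by (auto simp: sperm_split_def)
  ultimately show ?thesis using bij_imp_permutes by blast
qed

lemma sperm_split_snd:
  assumes \<sigma>: "\<sigma> \<in> signed_perms n"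
  shows "snd (sperm_split n \<sigma>) \<in> sign_vecs n"
proof -
  have "sgn (\<sigma> x) \<in> {-1, 1}" if "x \<in> {1..int n}" for x
    using sperm_in[OF \<sigma>, of x] that by (auto simp: sgn_if)
  thus ?thesis by (auto simp: sperm_split_def)
qed

lemma sperm_of_sperm:
  assumes p: "p \<in> abs_perms n" and e: "e \<in> sign_vecs n"
  shows "sperm_of n (p, e) \<in> signed_perms n"
proof -
  have pe: "p y \<in> {1..int n}" if "y \<in> {1..int n}" for y
    using p that permutes_in_image by fastforce
  have ee: "e y \<in> {-1, 1}" if "y \<in> {1..int n}" for y using e that by (auto simp: PiE_iff)
  have abs_val: "\<bar>sperm_of n (p, e) x\<bar> = p \<bar>x\<bar>" if "x \<in> ground n" for x
    using pe[OF abs_in_ground[OF that]] ee[OF abs_in_ground[OF that]] that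
    by (auto simp: sperm_of_def abs_mult sgn_if)
  have sgn_val: "sgn (sperm_of n (p, e) x) = sgn x * e \<bar>x\<bar>" if "x \<in> ground n" for x
    using pe[OF abs_in_ground[OF that]] ee[OF abs_in_ground[OF that]] that
    by (auto simp: sperm_of_def sgn_mult sgn_if)
  show ?thesis
  proof (rule sperm_intro)
    show "inj_on (sperm_of n (p, e)) (ground n)"
    proof (rule inj_onI)
      fix x y assume x: "x \<in> ground n" and y: "y \<in> ground n"
        and eq: "sperm_of n (p, e) x = sperm_of n (p, e) y"
      have "p \<bar>x\<bar> = p \<bar>y\<bar>" using abs_val[OF x] abs_val[OF y] eq by simp
      hence ab: "\<bar>x\<bar> = \<bar>y\<bar>" using permutes_inj[OF p[simplified]] by (simp add: inj_eq)
      have "sgn x * e \<bar>x\<bar> = sgn y * e \<bar>y\<bar>" using sgn_val[OF x] sgn_val[OF y] eq by simp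
      hence "sgn x = sgn y" using ab ee[OF abs_in_ground[OF x]] by auto
      thus "x = y" using ab by (metis sgn_mult_abs)
    qed
    show "sperm_of n (p, e) x \<in> ground n" if "x \<in> ground n" for x
      using abs_val[OF that] pe[OF abs_in_ground[OF that]] by simp
  qed (auto simp: sperm_of_def)
qed

lemma sperm_of_split: assumes \<sigma>: "\<sigma> \<in> signed_perms n" shows "sperm_of n (sperm_split n \<sigma>) = \<sigma>"
proof
  fix x show "sperm_of n (sperm_split n \<sigma>) x = \<sigma> x"
  proof (cases "x \<in> ground n")
    case False
    thus ?thesis using sperm_out[OF \<sigma> False] unfolding sperm_of_def by (simp only: if_not_P if_False)
  next
    case True
    have "sperm_of n (sperm_split n \<sigma>) x = sgn x * sgn (\<sigma> \<bar>x\<bar>) * \<bar>\<sigma> \<bar>x\<bar>\<bar>"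
      using True abs_in_ground[OF True] by (simp add: sperm_of_def sperm_split_def)
    also have "\<dots> = sgn x * \<sigma> \<bar>x\<bar>" by (simp add: mult.assoc sgn_mult_abs)
    also have "\<dots> = \<sigma> x" using sperm_odd[OF \<sigma>, of x] True by (cases "x > 0") auto
    finally show ?thesis .
  qed
qed

lemma sperm_split_of:
  assumes p: "p \<in> abs_perms n" and e: "e \<in> sign_vecs n"
  shows "sperm_split n (sperm_of n (p, e)) = (p, e)"
proof -
  have pe: "p y \<in> {1..int n}" if "y \<in> {1..int n}" for y
    using p that permutes_in_image by fastforce
  have ee: "e y \<in> {-1, 1}" if "y \<in> {1..int n}" for y using e that by (auto simp: PiE_iff)
  have "fst (sperm_split n (sperm_of n (p, e))) = p"
  proof
    fix x show "fst (sperm_split n (sperm_of n (p, e))) x = p x"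
    proof (cases "x \<in> {1..int n}")
      case True
      thus ?thesis using pe[OF True] ee[OF True] by (auto simp: sperm_split_def sperm_of_def abs_mult)
    next
      case False
      thus ?thesis using permutes_not_in[OF p[simplified] False] False unfolding sperm_split_def by auto
    qed
  qed
  moreover have "snd (sperm_split n (sperm_of n (p, e))) = e"
  proof (rule PiE_ext[OF sperm_split_snd[OF sperm_of_sperm[OF p e]] e])
    fix x assume x: "x \<in> {1..int n}"
    thus "snd (sperm_split n (sperm_of n (p, e))) x = e x"
      using pe[OF x] ee[OF x] by (auto simp: sperm_split_def sperm_of_def sgn_mult)
  qed
  ultimately show ?thesis by (simp add: prod_eq_iff)
qed

lemma card_signed_perms: "card (signed_perms n) = 2 ^ n * fact n"
proof -
  have "bij_betw (sperm_split n) (signed_perms n) (abs_perms n \<times> sign_vecs n)"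
  proof (rule bij_betw_byWitness[where f'="sperm_of n"])
    show "sperm_split n ` signed_perms n \<subseteq> abs_perms n \<times> sign_vecs n"
    proof
      fix y assume "y \<in> sperm_split n ` signed_perms n"
      then obtain \<sigma> where "\<sigma> \<in> signed_perms n" "y = sperm_split n \<sigma>" by blast
      thus "y \<in> abs_perms n \<times> sign_vecs n"
        using sperm_split_fst[of \<sigma> n] sperm_split_snd[of \<sigma> n] by (simp add: mem_Times_iff)
    qed
  qed (use sperm_of_split sperm_split_of sperm_of_sperm in auto)
  hence "card (signed_perms n) = card (abs_perms n \<times> sign_vecs n)" by (rule bij_betw_same_card)
  also have "\<dots> = card (abs_perms n) * card (sign_vecs n)" by (rule card_cartesian_product)
  also have "card (abs_perms n) = fact n" by (rule card_permutations) simp_all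
  also have "card (sign_vecs n) = 2 ^ n" by (simp add: card_PiE numeral_2_eq_2)
  finally show ?thesis by simp
qed

section \<open>The rank order 1 < ... < n < -n < ... < -1\<close>

definition unrank :: "nat \<Rightarrow> int \<Rightarrow> int" where
  "unrank n t = (if t \<le> int n then t else t - 2 * int n - 1)"

lemma brank_range: "x \<in> ground n \<Longrightarrow> 1 \<le> brank n x \<and> brank n x \<le> 2 * int n"
  by (auto simp: brank_def)

lemma brank_neg: "x \<in> ground n \<Longrightarrow> brank n (- x) = 2 * int n + 1 - brank n x"
  by (auto simp: brank_def)

lemma brank_le_n: "x \<in> ground n \<Longrightarrow> brank n x \<le> int n \<longleftrightarrow> x > 0"
  by (auto simp: brank_def)

lemma brank_unrank:
  "1 \<le> t \<Longrightarrow> t \<le> 2 * int n \<Longrightarrow> brank n (unrank n t) = t \<and> unrank n t \<in> ground n"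
  by (auto simp: brank_def unrank_def)

lemma brank_inj: "x \<in> ground n \<Longrightarrow> y \<in> ground n \<Longrightarrow> brank n x = brank n y \<Longrightarrow> x = y"
  by (auto simp: brank_def split: if_splits)

section \<open>The riffle attached to a labeling\<close>

definition odd_ext :: "(nat \<Rightarrow> int) \<Rightarrow> int \<Rightarrow> int" where
  "odd_ext h x = (if x > 0 then h (nat x) else if x < 0 then - h (nat (- x)) else 0)"

lemma odd_ext_neg: "odd_ext h (- x) = - odd_ext h x"
  by (simp add: odd_ext_def)

definition tie_rank :: "nat \<Rightarrow> int \<Rightarrow> int" where
  "tie_rank n x = (if x = 0 then 2 * int n + 1 else 2 * brank n x)"

text \<open>Cards are sorted by decreasing label, ties broken by rank; both criteria are packed into one
  integer.  Negation of a card reflects its key at the centre 2n+1, the key of 0.\<close>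
definition shuffle_key :: "nat \<Rightarrow> (nat \<Rightarrow> int) \<Rightarrow> int \<Rightarrow> int" where
  "shuffle_key n h x = - odd_ext h x * (4 * int n + 4) + tie_rank n x"

definition key_rank :: "nat \<Rightarrow> (nat \<Rightarrow> int) \<Rightarrow> int \<Rightarrow> nat" where
  "key_rank n h x = card {y \<in> ground n. shuffle_key n h y < shuffle_key n h x}"

definition riffle :: "nat \<Rightarrow> (nat \<Rightarrow> int) \<Rightarrow> int \<Rightarrow> int" where
  "riffle n h x = (if x \<in> ground n then unrank n (int (key_rank n h x) + 1) else x)"

abbreviation ground0 :: "nat \<Rightarrow> int set" where
  "ground0 n \<equiv> insert 0 (ground n)"

lemma tie_rank_range: "x \<in> ground0 n \<Longrightarrow> 1 \<le> tie_rank n x \<and> tie_rank n x \<le> 4 * int n + 1"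
  using brank_range[of x n] by (auto simp: tie_rank_def)

lemma tie_rank_inj:
  assumes "x \<in> ground0 n" "y \<in> ground0 n" "tie_rank n x = tie_rank n y"
  shows "x = y"
proof -
  have "2 * a \<noteq> 2 * int n + 1" for a :: int by presburger
  thus ?thesis using assms brank_inj[of x n y] by (auto simp: tie_rank_def split: if_splits)
qed

lemma tie_rank_neg: "x \<in> ground0 n \<Longrightarrow> tie_rank n (- x) = 2 * (2 * int n + 1) - tie_rank n x"
  using brank_neg[of x n] by (auto simp: tie_rank_def)

lemma packed_less_iff:
  fixes a c p q M :: int
  assumes "\<bar>p - q\<bar> < M"
  shows "(- a * M + p < - c * M + q) \<longleftrightarrow> (a > c \<or> (a = c \<and> p < q))"
proof (cases "a = c")
  case False
  show ?thesis
  proof (cases "a > c")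
    case True
    hence "(a - c) * M \<ge> 1 * M" using assms by (intro mult_right_mono) auto
    thus ?thesis using True assms by (auto simp: algebra_simps)
  next
    case F: False
    hence "(c - a) * M \<ge> 1 * M" using assms \<open>a \<noteq> c\<close> by (intro mult_right_mono) auto
    thus ?thesis using F False assms by (auto simp: algebra_simps)
  qed
qed simp

lemma shuffle_key_less_iff:
  assumes "x \<in> ground0 n" "y \<in> ground0 n"
  shows "shuffle_key n h x < shuffle_key n h y \<longleftrightarrow>
    (odd_ext h x > odd_ext h y \<or> (odd_ext h x = odd_ext h y \<and> tie_rank n x < tie_rank n y))"
proof -
  have "\<bar>tie_rank n x - tie_rank n y\<bar> < 4 * int n + 4"
    using tie_rank_range[OF assms(1)] tie_rank_range[OF assms(2)] by auto
  thus ?thesis unfolding shuffle_key_def by (rule packed_less_iff)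
qed

lemma shuffle_key_trich:
  assumes "x \<in> ground0 n" "y \<in> ground0 n" "x \<noteq> y"
  shows "shuffle_key n h x < shuffle_key n h y \<or> shuffle_key n h y < shuffle_key n h x"
  using shuffle_key_less_iff[OF assms(1,2), of h] shuffle_key_less_iff[OF assms(2,1), of h]
    tie_rank_inj[OF assms(1,2)] assms(3) by fastforce

lemma shuffle_key_neg: "x \<in> ground0 n \<Longrightarrow> shuffle_key n h (- x) = 2 * (2 * int n + 1) - shuffle_key n h x"
  by (simp add: shuffle_key_def tie_rank_neg odd_ext_neg)

lemma shuffle_key_0: "shuffle_key n h 0 = 2 * int n + 1"
  by (simp add: shuffle_key_def tie_rank_def odd_ext_def)

lemma key_rank_less: "x \<in> ground n \<Longrightarrow> key_rank n h x < 2 * n"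
proof -
  assume x: "x \<in> ground n"
  have "{y \<in> ground n. shuffle_key n h y < shuffle_key n h x} \<subset> ground n" using x by auto
  hence "key_rank n h x < card (ground n)" unfolding key_rank_def by (rule psubset_card_mono[rotated]) simp
  thus ?thesis by (simp add: card_ground)
qed

lemma key_rank_mono:
  assumes "x \<in> ground n" "shuffle_key n h x < shuffle_key n h y"
  shows "key_rank n h x < key_rank n h y"
proof -
  have "{z \<in> ground n. shuffle_key n h z < shuffle_key n h x} \<subset> {z \<in> ground n. shuffle_key n h z < shuffle_key n h y}"
    using assms by auto
  thus ?thesis unfolding key_rank_def by (rule psubset_card_mono[rotated]) simp
qed

lemma key_rank_less_iff:
  assumes "x \<in> ground n" "y \<in> ground n"
  shows "key_rank n h x < key_rank n h y \<longleftrightarrow> shuffle_key n h x < shuffle_key n h y"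
proof
  assume less: "key_rank n h x < key_rank n h y"
  hence "x \<noteq> y" by auto
  thus "shuffle_key n h x < shuffle_key n h y"
    using shuffle_key_trich[of x n y h] key_rank_mono[OF assms(2), of h x] less assms by auto
qed (rule key_rank_mono[OF assms(1)])

lemma key_rank_neg:
  assumes x: "x \<in> ground n"
  shows "key_rank n h (- x) = 2 * n - 1 - key_rank n h x"
proof -
  let ?L = "{y \<in> ground n. shuffle_key n h y < shuffle_key n h x}"
  let ?G = "{y \<in> ground n. shuffle_key n h y > shuffle_key n h x}"
  have part: "ground n = (?L \<union> ?G) \<union> {x}" using shuffle_key_trich[of _ n x h] x by auto
  have "card (ground n) = card (?L \<union> ?G) + card {x}"
    by (subst part, rule card_Un_disjoint) auto
  also have "card (?L \<union> ?G) = card ?L + card ?G"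
    by (rule card_Un_disjoint) auto
  finally have "card (ground n) = card ?L + card ?G + 1" by simp
  moreover have "{y \<in> ground n. shuffle_key n h y < shuffle_key n h (- x)} = uminus ` ?G"
  proof (intro equalityI subsetI)
    fix y assume "y \<in> {y \<in> ground n. shuffle_key n h y < shuffle_key n h (- x)}"
    hence "- y \<in> ?G" using shuffle_key_neg[of y n h] shuffle_key_neg[of x n h] x by auto
    thus "y \<in> uminus ` ?G" by (intro image_eqI[where x="- y"]) auto
  next
    fix y assume "y \<in> uminus ` ?G"
    then obtain z where "y = - z" "z \<in> ?G" by auto
    thus "y \<in> {y \<in> ground n. shuffle_key n h y < shuffle_key n h (- x)}"
      using shuffle_key_neg[of z n h] shuffle_key_neg[of x n h] x by auto
  qed
  ultimately show ?thesis unfolding key_rank_def by (simp add: card_uminus_image card_ground)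
qed

lemma riffle_in: "x \<in> ground n \<Longrightarrow> riffle n h x \<in> ground n \<and> brank n (riffle n h x) = int (key_rank n h x) + 1"
  using brank_unrank[of "int (key_rank n h x) + 1" n] key_rank_less[of x n h] by (auto simp: riffle_def)

lemma riffle_sperm: "riffle n h \<in> signed_perms n"
proof (rule sperm_intro)
  show "inj_on (riffle n h) (ground n)"
  proof (rule inj_onI)
    fix x y assume "x \<in> ground n" "y \<in> ground n" "riffle n h x = riffle n h y"
    hence "key_rank n h x = key_rank n h y" using riffle_in[of x n h] riffle_in[of y n h] by auto
    thus "x = y" using key_rank_mono[of x n h y] key_rank_mono[of y n h x] shuffle_key_trich[of x n y h]
        \<open>x \<in> ground n\<close> \<open>y \<in> ground n\<close> by auto
  qed
  show "riffle n h (- x) = - riffle n h x" for x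
  proof (cases "x \<in> ground n")
    case True
    have "- x \<in> ground n" using True by auto
    have "brank n (riffle n h (- x)) = brank n (- riffle n h x)"
      using riffle_in[OF True, of h] riffle_in[OF \<open>- x \<in> ground n\<close>, of h] key_rank_neg[OF True, of h]
        brank_neg[of "riffle n h x" n] key_rank_less[OF True, of h]
      by auto
    moreover have "- riffle n h x \<in> ground n" using riffle_in[OF True, of h] by auto
    ultimately show ?thesis using brank_inj riffle_in[OF \<open>- x \<in> ground n\<close>, of h] by blast
  next
    case False
    hence "- x \<notin> ground n" by auto
    thus ?thesis using False unfolding riffle_def by (simp only: if_not_P if_False)
  qed
  show "riffle n h x \<in> ground n" if "x \<in> ground n" for x using riffle_in[OF that] by blast
  show "riffle n h x = x" if "x \<notin> ground n" for x
    using that unfolding riffle_def by (simp only: if_not_P if_False)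
qed

text \<open>Exactly n cards have a key below the centre: the keys come in pairs x, -x reflected at it.\<close>
lemma card_keys_below_centre: "card {y \<in> ground n. shuffle_key n h y < 2 * int n + 1} = n"
proof -
  let ?P = "{y \<in> ground n. shuffle_key n h y < 2 * int n + 1}"
  have ne: "shuffle_key n h y \<noteq> 2 * int n + 1" if "y \<in> ground n" for y
  proof -
    have "y \<noteq> 0" using that by auto
    thus ?thesis using shuffle_key_trich[of y n 0 h] shuffle_key_0[of n h] that by auto
  qed
  have part: "ground n = ?P \<union> uminus ` ?P"
  proof (intro equalityI subsetI)
    fix y assume y: "y \<in> ground n"
    thus "y \<in> ?P \<union> uminus ` ?P" using ne[OF y] shuffle_key_neg[of y n h]
      by (cases "shuffle_key n h y < 2 * int n + 1") (auto intro!: image_eqI[where x="- y"])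
  qed auto
  have "?P \<inter> uminus ` ?P = {}"
  proof (rule ccontr)
    assume "?P \<inter> uminus ` ?P \<noteq> {}"
    then obtain y where "y \<in> ?P" "- y \<in> ?P" by force
    thus False using shuffle_key_neg[of y n h] by auto
  qed
  hence "card (ground n) = card ?P + card (uminus ` ?P)"
    by (subst (1) part, intro card_Un_disjoint) auto
  thus ?thesis by (simp add: card_ground card_uminus_image)
qed

lemma riffle_neg_iff:
  assumes x: "x \<in> ground n"
  shows "riffle n h x < 0 \<longleftrightarrow> shuffle_key n h x > 2 * int n + 1"
proof -
  let ?P = "{y \<in> ground n. shuffle_key n h y < 2 * int n + 1}"
  let ?B = "{y \<in> ground n. shuffle_key n h y < shuffle_key n h x}"
  have "riffle n h x < 0 \<longleftrightarrow> brank n (riffle n h x) > int n"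
    using brank_le_n[of "riffle n h x" n] riffle_in[OF x, of h] by force
  also have "\<dots> \<longleftrightarrow> key_rank n h x \<ge> n" using riffle_in[OF x, of h] by auto
  also have "\<dots> \<longleftrightarrow> shuffle_key n h x > 2 * int n + 1"
  proof
    assume "shuffle_key n h x > 2 * int n + 1"
    hence "?P \<subseteq> ?B" by auto
    thus "key_rank n h x \<ge> n"
      unfolding key_rank_def using card_keys_below_centre[of n h] card_mono[of ?B ?P] by simp
  next
    assume "key_rank n h x \<ge> n"
    show "shuffle_key n h x > 2 * int n + 1"
    proof (rule ccontr)
      assume "\<not> ?thesis"
      hence "shuffle_key n h x < 2 * int n + 1"
        using shuffle_key_trich[of x n 0 h] shuffle_key_0[of n h] x by force
      hence "?B \<subset> ?P" using x by auto
      hence "card ?B < card ?P" by (rule psubset_card_mono[rotated]) simp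
      thus False using \<open>key_rank n h x \<ge> n\<close> card_keys_below_centre[of n h] by (simp add: key_rank_def)
    qed
  qed
  finally show ?thesis .
qed

section \<open>Descents and carry events\<close>

definition is_desc :: "nat \<Rightarrow> (int \<Rightarrow> int) \<Rightarrow> nat \<Rightarrow> bool" where
  "is_desc n \<sigma> k =
     (if k < n then brank n (\<sigma> (int k)) > brank n (\<sigma> (int k + 1)) else \<sigma> (int n) < 0)"

lemma bdes_eq: "n \<ge> 1 \<Longrightarrow> bdes n \<sigma> = card {k \<in> {1..n}. is_desc n \<sigma> k}"
proof -
  assume "n \<ge> 1"
  hence "bdescents n \<sigma> = {k \<in> {1..n}. is_desc n \<sigma> k}"
    unfolding bdescents_def is_desc_def by auto
  thus ?thesis by (simp add: bdes_def)
qed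

lemma bdes_le: "n \<ge> 1 \<Longrightarrow> bdes n \<sigma> \<le> n"
proof -
  assume "n \<ge> 1"
  have "card {k \<in> {1..n}. is_desc n \<sigma> k} \<le> card {1..n}" by (rule card_mono) auto
  thus ?thesis using \<open>n \<ge> 1\<close> by (simp add: bdes_eq)
qed

lemma bdes_id: "n \<ge> 1 \<Longrightarrow> bdes n id = 0"
  by (auto simp: bdes_eq is_desc_def brank_def)

lemma strict_incr_squeezed:
  fixes f :: "nat \<Rightarrow> int"
  assumes step: "\<And>k. 1 \<le> k \<Longrightarrow> k < n \<Longrightarrow> f k < f (Suc k)"
    and first: "1 \<le> f 1" and last: "f n \<le> int n" and k: "1 \<le> k" "k \<le> n"
  shows "f k = int k"
proof -
  have lo: "k \<le> n \<Longrightarrow> 1 \<le> k \<Longrightarrow> int k \<le> f k" for k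
  proof (induction k)
    case (Suc k) thus ?case using first step[of k] by (cases "k = 0") auto
  qed simp
  have hi: "t \<le> n - 1 \<Longrightarrow> f (n - t) \<le> int (n - t)" for t
  proof (induction t)
    case (Suc t)
    have "f (n - Suc t) < f (Suc (n - Suc t))" using step[of "n - Suc t"] Suc.prems by simp
    moreover have "Suc (n - Suc t) = n - t" using Suc.prems by simp
    ultimately show ?case using Suc by simp
  qed (use last in simp)
  show ?thesis using lo[OF k(2,1)] hi[of "n - k"] k by simp
qed

lemma sperm_eq_id_if_fixes_pos:
  assumes \<sigma>: "\<sigma> \<in> signed_perms n" and pos: "\<And>k. 1 \<le> k \<Longrightarrow> k \<le> n \<Longrightarrow> \<sigma> (int k) = int k"
  shows "\<sigma> = id"
proof
  fix x :: int
  show "\<sigma> x = id x"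
  proof (cases "x \<in> ground n")
    case False thus ?thesis using sperm_out[OF \<sigma>] by simp
  next
    case True
    have "1 \<le> nat \<bar>x\<bar>" "nat \<bar>x\<bar> \<le> n" using True by auto
    hence "\<sigma> \<bar>x\<bar> = \<bar>x\<bar>" using pos[of "nat \<bar>x\<bar>"] by simp
    thus ?thesis using sperm_odd[OF \<sigma>, of x] by (cases "x \<ge> 0") auto
  qed
qed

lemma bdes_eq_0_imp_id:
  assumes n: "n \<ge> 1" and \<sigma>: "\<sigma> \<in> signed_perms n" and d: "bdes n \<sigma> = 0"
  shows "\<sigma> = id"
proof -
  have no_desc: "\<And>k. 1 \<le> k \<Longrightarrow> k \<le> n \<Longrightarrow> \<not> is_desc n \<sigma> k"
    using d by (auto simp: bdes_eq[OF n])
  define f where "f k = brank n (\<sigma> (int k))" for k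
  have in_ground: "\<And>k. 1 \<le> k \<Longrightarrow> k \<le> n \<Longrightarrow> \<sigma> (int k) \<in> ground n"
    using sperm_in[OF \<sigma> int_in_ground] by blast
  have last_pos: "\<sigma> (int n) > 0"
    using no_desc[of n] n in_ground[of n] by (auto simp: is_desc_def)
  have step: "f k < f (Suc k)" if "1 \<le> k" "k < n" for k
  proof -
    have "f k \<le> f (Suc k)" using no_desc[of k] that by (auto simp: is_desc_def f_def add.commute)
    moreover have "\<sigma> (int k) \<noteq> \<sigma> (int (Suc k))"
      using sperm_bij[OF \<sigma>] by (simp add: bij_def inj_eq)
    hence "f k \<noteq> f (Suc k)"
      using brank_inj[OF in_ground[OF that(1)] in_ground[of "Suc k"]] that unfolding f_def by auto
    ultimately show ?thesis by simp
  qed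
  have fixes_pos: "\<sigma> (int k) = int k" if k: "1 \<le> k" "k \<le> n" for k
  proof -
    have "f k = int k"
      by (rule strict_incr_squeezed[where f=f, OF step _ _ k])
         (use brank_range[OF in_ground[of 1]] in_ground[of n] last_pos n in \<open>auto simp: f_def brank_def\<close>)
    moreover have "\<sigma> (int k) > 0"
      using calculation k brank_le_n[OF in_ground[OF k]] unfolding f_def by simp
    ultimately show ?thesis unfolding f_def brank_def by simp
  qed
  show ?thesis by (rule sperm_eq_id_if_fixes_pos[OF \<sigma> fixes_pos])
qed

definition label_ext :: "nat \<Rightarrow> (nat \<Rightarrow> int) \<Rightarrow> nat \<Rightarrow> int" where
  "label_ext n g k = (if k \<le> n then g k else 0)"

definition carry_event :: "nat \<Rightarrow> (nat \<Rightarrow> int) \<Rightarrow> (nat \<Rightarrow> bool) \<Rightarrow> nat \<Rightarrow> bool" where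
  "carry_event n g \<delta> k =
     (label_ext n g (Suc k) > label_ext n g k \<or> (label_ext n g (Suc k) = label_ext n g k \<and> \<delta> k))"

lemma is_desc_riffle:
  assumes \<rho>: "\<rho> \<in> signed_perms n" and k: "1 \<le> k" "k \<le> n"
  shows "is_desc n (riffle n h \<circ> \<rho>) k \<longleftrightarrow>
           carry_event n (\<lambda>k. odd_ext h (\<rho> (int k))) (is_desc n \<rho>) k"
proof (cases "k < n")
  case True
  have a: "\<rho> (int k) \<in> ground n" using sperm_in[OF \<rho> int_in_ground[OF k]] .
  have b: "\<rho> (int k + 1) \<in> ground n"
    using sperm_in[OF \<rho> int_in_ground[of "Suc k" n]] True by (simp add: add.commute)
  have "is_desc n (riffle n h \<circ> \<rho>) k \<longleftrightarrow> key_rank n h (\<rho> (int k + 1)) < key_rank n h (\<rho> (int k))"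
    using True riffle_in[OF a, of h] riffle_in[OF b, of h] by (auto simp: is_desc_def)
  also have "\<dots> \<longleftrightarrow> shuffle_key n h (\<rho> (int k + 1)) < shuffle_key n h (\<rho> (int k))"
    by (rule key_rank_less_iff[OF b a])
  also have "\<dots> \<longleftrightarrow> carry_event n (\<lambda>k. odd_ext h (\<rho> (int k))) (is_desc n \<rho>) k"
    using shuffle_key_less_iff[of "\<rho> (int k + 1)" n "\<rho> (int k)" h] a b True
    by (auto simp: carry_event_def label_ext_def is_desc_def tie_rank_def add.commute)
  finally show ?thesis .
next
  case False
  hence kn: "k = n" using k by simp
  have a: "\<rho> (int n) \<in> ground n" using sperm_in[OF \<rho> int_in_ground[OF k(1)]] kn by simp
  have "is_desc n (riffle n h \<circ> \<rho>) k \<longleftrightarrow> shuffle_key n h 0 < shuffle_key n h (\<rho> (int n))"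
    using riffle_neg_iff[OF a, of h] kn by (simp add: is_desc_def shuffle_key_0)
  also have "\<dots> \<longleftrightarrow> carry_event n (\<lambda>k. odd_ext h (\<rho> (int k))) (is_desc n \<rho>) k"
    using shuffle_key_less_iff[of 0 n "\<rho> (int n)" h] a kn brank_le_n[OF a]
    by (auto simp: carry_event_def label_ext_def is_desc_def tie_rank_def odd_ext_def)
  finally show ?thesis .
qed

lemma bdes_riffle:
  assumes "n \<ge> 1" "\<rho> \<in> signed_perms n"
  shows "bdes n (riffle n h \<circ> \<rho>) =
           card {k \<in> {1..n}. carry_event n (\<lambda>k. odd_ext h (\<rho> (int k))) (is_desc n \<rho>) k}"
  unfolding bdes_eq[OF assms(1)] using is_desc_riffle[OF assms(2)]
  by (metis (no_types, lifting) atLeastAtMost_iff)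

section \<open>Counting carry events: the carries bijection\<close>

definition labelings :: "nat \<Rightarrow> nat \<Rightarrow> (nat \<Rightarrow> int) set" where
  "labelings n b = PiE {1..n} (\<lambda>_. {- int b..int b})"

definition digit_vecs :: "nat \<Rightarrow> nat \<Rightarrow> (nat \<Rightarrow> nat) set" where
  "digit_vecs n b = PiE {1..n} (\<lambda>_. {0..2*b})"

lemma card_labelings: "card (labelings n b) = (2 * b + 1) ^ n"
proof -
  have "nat (2 * int b + 1) = 2 * b + 1" by simp
  thus ?thesis by (simp add: labelings_def card_PiE)
qed

lemma card_digit_vecs: "card (digit_vecs n b) = (2 * b + 1) ^ n"
  by (simp add: digit_vecs_def card_PiE)

lemma finite_labelings [simp]: "finite (labelings n b)"
  by (simp add: labelings_def finite_PiE)

lemma finite_digit_vecs [simp]: "finite (digit_vecs n b)"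
  by (simp add: digit_vecs_def finite_PiE)

lemma card_filter_eq_sum:
  "finite A \<Longrightarrow> of_nat (card {x \<in> A. P x}) = (\<Sum>x\<in>A. (of_bool (P x) :: 'a :: semiring_1))"
  by (simp add: sum.inter_filter[symmetric] of_bool_def)

definition shifted_label :: "nat \<Rightarrow> nat \<Rightarrow> (nat \<Rightarrow> int) \<Rightarrow> nat \<Rightarrow> int" where
  "shifted_label n b g k = label_ext n g k + int b"

text \<open>The digit X_k is the drop of the shifted label from k to k+1, corrected by delta k, modulo
  2b+1; it wraps around exactly at the carry events.\<close>
definition carry_digits :: "nat \<Rightarrow> nat \<Rightarrow> (nat \<Rightarrow> bool) \<Rightarrow> (nat \<Rightarrow> int) \<Rightarrow> nat \<Rightarrow> nat" where
  "carry_digits n b \<delta> g = restrict (\<lambda>k. nat ((shifted_label n b g k - shifted_label n b g (Suc k)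
                                     - of_bool (\<delta> k)) mod (2 * int b + 1))) {1..n}"

lemma carry_digits_in: "carry_digits n b \<delta> g \<in> digit_vecs n b"
proof -
  have "nat (v mod (2 * int b + 1)) \<le> 2 * b" for v :: int
  proof -
    have "v mod (2 * int b + 1) < 2 * int b + 1" by (rule pos_mod_bound) simp
    thus ?thesis by (simp add: nat_le_iff)
  qed
  thus ?thesis unfolding carry_digits_def digit_vecs_def by auto
qed

lemma shifted_label_range:
  assumes "g \<in> labelings n b" "1 \<le> k"
  shows "0 \<le> shifted_label n b g k \<and> shifted_label n b g k \<le> 2 * int b"
proof (cases "k \<le> n")
  case True
  hence "g k \<in> {- int b..int b}" using assms unfolding labelings_def by (auto simp: PiE_iff)
  thus ?thesis using True by (simp add: shifted_label_def label_ext_def)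
qed (simp add: shifted_label_def label_ext_def)

lemma carry_digits_val:
  assumes g: "g \<in> labelings n b" and k: "1 \<le> k" "k \<le> n"
  shows "int (carry_digits n b \<delta> g k) =
           shifted_label n b g k - shifted_label n b g (Suc k) - of_bool (\<delta> k)
           + (2 * int b + 1) * of_bool (carry_event n g \<delta> k)"
proof -
  let ?v = "shifted_label n b g k - shifted_label n b g (Suc k) - of_bool (\<delta> k)"
  let ?m = "2 * int b + 1"
  have r1: "0 \<le> shifted_label n b g k \<and> shifted_label n b g k \<le> 2 * int b"
    using shifted_label_range[OF g k(1)] .
  have r2: "0 \<le> shifted_label n b g (Suc k) \<and> shifted_label n b g (Suc k) \<le> 2 * int b"
    using shifted_label_range[OF g, of "Suc k"] by simp
  have event: "carry_event n g \<delta> k \<longleftrightarrow> ?v < 0"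
    by (auto simp: carry_event_def shifted_label_def)
  have "?v mod ?m = ?v + ?m * of_bool (?v < 0)"
  proof (cases "?v < 0")
    case True
    have "(?v + ?m) mod ?m = ?v + ?m" by (rule mod_pos_pos_trivial) (use r1 r2 True in auto)
    thus ?thesis using True by simp
  next
    case False
    have "?v mod ?m = ?v" by (rule mod_pos_pos_trivial) (use r1 r2 False in auto)
    thus ?thesis using False by simp
  qed
  moreover have "int (carry_digits n b \<delta> g k) = ?v mod ?m" using k unfolding carry_digits_def by simp
  ultimately show ?thesis using event by simp
qed

text \<open>Summing the digits telescopes: the label drops cancel and every carry event adds 2b+1.\<close>
lemma carry_digits_sum:
  assumes g: "g \<in> labelings n b"
  shows "int (card {k \<in> {1..n}. \<delta> k} + b + sum (carry_digits n b \<delta> g) {1..n})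
       = shifted_label n b g 1 + (2 * int b + 1) * int (card {k \<in> {1..n}. carry_event n g \<delta> k})"
proof -
  let ?m = "2 * int b + 1" and ?G = "shifted_label n b g"
  have "(\<Sum>k=1..n. ?G (Suc k) - ?G k) = ?G (Suc n) - ?G 1"
    by (rule sum_Suc_diff) simp
  hence "- (\<Sum>k=1..n. ?G (Suc k) - ?G k) = ?G 1 - ?G (Suc n)" by simp
  hence telescope: "(\<Sum>k=1..n. ?G k - ?G (Suc k)) = ?G 1 - ?G (Suc n)"
    by (simp add: sum_negf[symmetric])
  have "int (sum (carry_digits n b \<delta> g) {1..n}) = (\<Sum>k=1..n. int (carry_digits n b \<delta> g k))"
    by simp
  also have "\<dots> = (\<Sum>k=1..n. (?G k - ?G (Suc k)) - of_bool (\<delta> k) + ?m * of_bool (carry_event n g \<delta> k))"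
    by (rule sum.cong) (auto simp: carry_digits_val[OF g])
  also have "\<dots> = (\<Sum>k=1..n. ?G k - ?G (Suc k)) - (\<Sum>k=1..n. of_bool (\<delta> k))
                  + ?m * (\<Sum>k=1..n. of_bool (carry_event n g \<delta> k))"
    by (simp add: sum.distrib sum_subtractf sum_distrib_left)
  also have "(\<Sum>k=1..n. (of_bool (\<delta> k) :: int)) = int (card {k \<in> {1..n}. \<delta> k})"
    by (rule card_filter_eq_sum[symmetric]) simp
  also have "(\<Sum>k=1..n. (of_bool (carry_event n g \<delta> k) :: int))
           = int (card {k \<in> {1..n}. carry_event n g \<delta> k})"
    by (rule card_filter_eq_sum[symmetric]) simp
  also note telescope
  also have "?G (Suc n) = int b" by (simp add: shifted_label_def label_ext_def)
  finally show ?thesis by simp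
qed

lemma carry_events_eq_div:
  assumes g: "g \<in> labelings n b"
  shows "card {k \<in> {1..n}. carry_event n g \<delta> k}
           = (card {k \<in> {1..n}. \<delta> k} + b + sum (carry_digits n b \<delta> g) {1..n}) div (2 * b + 1)"
proof -
  let ?s = "card {k \<in> {1..n}. carry_event n g \<delta> k}"
  let ?N = "card {k \<in> {1..n}. \<delta> k} + b + sum (carry_digits n b \<delta> g) {1..n}"
  have "int ?N div (2 * int b + 1) = int ?s"
    unfolding carry_digits_sum[OF g] using shifted_label_range[OF g, of 1]
    by (simp add: add.commute div_add_self2 div_pos_pos_trivial)
  moreover have "int (?N div (2 * b + 1)) = int ?N div int (2 * b + 1)" by (rule zdiv_int)
  ultimately have "int (?N div (2 * b + 1)) = int ?s" by (simp add: add.commute)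
  thus ?thesis by simp
qed

text \<open>The labels can be recovered from the digits from right to left, so carry_digits is injective.\<close>
lemma carry_digits_inj: "inj_on (carry_digits n b \<delta>) (labelings n b)"
proof (rule inj_onI)
  fix g g' assume g: "g \<in> labelings n b" and g': "g' \<in> labelings n b"
    and eq: "carry_digits n b \<delta> g = carry_digits n b \<delta> g'"
  let ?m = "2 * int b + 1"
  have from_right: "t \<le> n \<Longrightarrow> shifted_label n b g (n + 1 - t) = shifted_label n b g' (n + 1 - t)" for t
  proof (induction t)
    case 0 thus ?case by (simp add: shifted_label_def label_ext_def)
  next
    case (Suc t)
    define k where "k = n - t"
    have k: "1 \<le> k" "k \<le> n" "Suc k = n + 1 - t" "n + 1 - Suc t = k"
      using Suc.prems by (auto simp: k_def)
    have IH: "shifted_label n b g (Suc k) = shifted_label n b g' (Suc k)" using Suc k by simp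
    have "(shifted_label n b g k - shifted_label n b g (Suc k) - of_bool (\<delta> k)) mod ?m
        = (shifted_label n b g' k - shifted_label n b g' (Suc k) - of_bool (\<delta> k)) mod ?m"
    proof -
      have "int (carry_digits n b \<delta> g k) = int (carry_digits n b \<delta> g' k)" using eq by simp
      thus ?thesis using k unfolding carry_digits_def by simp
    qed
    hence "(shifted_label n b g k - shifted_label n b g (Suc k) - of_bool (\<delta> k)
             + (shifted_label n b g (Suc k) + of_bool (\<delta> k))) mod ?m
         = (shifted_label n b g' k - shifted_label n b g' (Suc k) - of_bool (\<delta> k)
             + (shifted_label n b g (Suc k) + of_bool (\<delta> k))) mod ?m"
      by (rule mod_add_cong) simp
    hence "shifted_label n b g k mod ?m = shifted_label n b g' k mod ?m" using IH by simp
    moreover have "shifted_label n b g k mod ?m = shifted_label n b g k"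
      using shifted_label_range[OF g k(1)] by (intro mod_pos_pos_trivial) auto
    moreover have "shifted_label n b g' k mod ?m = shifted_label n b g' k"
      using shifted_label_range[OF g' k(1)] by (intro mod_pos_pos_trivial) auto
    ultimately show ?case using k by simp
  qed
  show "g = g'"
  proof (rule PiE_ext[OF g[unfolded labelings_def] g'[unfolded labelings_def]])
    fix k assume "k \<in> {1..n}"
    hence "n + 1 - (n + 1 - k) = k" "n + 1 - k \<le> n" by auto
    hence "shifted_label n b g k = shifted_label n b g' k" using from_right[of "n + 1 - k"] by simp
    thus "g k = g' k" using \<open>k \<in> {1..n}\<close> by (simp add: shifted_label_def label_ext_def)
  qed
qed

lemma carry_digits_image: "carry_digits n b \<delta> ` labelings n b = digit_vecs n b"
  by (rule card_subset_eq)
     (auto simp: carry_digits_in card_image[OF carry_digits_inj] card_labelings card_digit_vecs)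

lemma card_carry_events:
  "card {g \<in> labelings n b. card {k \<in> {1..n}. carry_event n g \<delta> k} = i}
   = card {X \<in> digit_vecs n b. (card {k \<in> {1..n}. \<delta> k} + b + sum X {1..n}) div (2 * b + 1) = i}"
proof -
  let ?P = "\<lambda>X. (card {k \<in> {1..n}. \<delta> k} + b + sum X {1..n}) div (2 * b + 1) = i"
  let ?A = "{g \<in> labelings n b. ?P (carry_digits n b \<delta> g)}"
  have "{g \<in> labelings n b. card {k \<in> {1..n}. carry_event n g \<delta> k} = i} = ?A"
    using carry_events_eq_div by auto
  moreover have "card ?A = card (carry_digits n b \<delta> ` ?A)"
    by (rule card_image[symmetric]) (rule inj_on_subset[OF carry_digits_inj], auto)
  moreover have "carry_digits n b \<delta> ` ?A = {X \<in> carry_digits n b \<delta> ` labelings n b. ?P X}"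
    by blast
  ultimately show ?thesis unfolding carry_digits_image by simp
qed

section \<open>Stars and bars\<close>

lemma sum_PiE_insert:
  fixes f :: "('a \<Rightarrow> 'b) \<Rightarrow> 'c :: comm_monoid_add"
  assumes "a \<notin> S" "finite S" "\<And>i. finite (T i)"
  shows "(\<Sum>X\<in>PiE (insert a S) T. f X) = (\<Sum>v\<in>T a. \<Sum>Y\<in>PiE S T. f (Y(a := v)))"
proof -
  have inj: "inj_on (\<lambda>(y, g). g(a := y)) (T a \<times> PiE S T)"
  proof (rule inj_onI, clarify)
    fix v Y v' Y'
    assume A: "v \<in> T a" "Y \<in> PiE S T" "v' \<in> T a" "Y' \<in> PiE S T" and eq: "Y(a := v) = Y'(a := v')"
    have "v = v'" using fun_cong[OF eq, of a] by simp
    moreover have "Y = Y'"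
    proof
      fix x show "Y x = Y' x"
      proof (cases "x = a")
        case True thus ?thesis using A assms(1) by (auto simp: PiE_iff extensional_def)
      next
        case False thus ?thesis using fun_cong[OF eq, of x] by simp
      qed
    qed
    ultimately show "v = v' \<and> Y = Y'" by simp
  qed
  have "(\<Sum>X\<in>PiE (insert a S) T. f X) = (\<Sum>X\<in>(\<lambda>(y, g). g(a := y)) ` (T a \<times> PiE S T). f X)"
    by (simp only: PiE_insert_eq)
  also have "\<dots> = (\<Sum>(v, Y)\<in>T a \<times> PiE S T. f (Y(a := v)))"
    by (subst sum.reindex[OF inj]) (simp add: case_prod_unfold)
  also have "\<dots> = (\<Sum>v\<in>T a. \<Sum>Y\<in>PiE S T. f (Y(a := v)))"
    by (rule sum.cartesian_product[symmetric])
  finally show ?thesis .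
qed

lemma card_PiE_insert_filter:
  assumes "a \<notin> S" "finite S" "\<And>i. finite (T i)"
  shows "card {X \<in> PiE (insert a S) T. P X} = (\<Sum>v\<in>T a. card {Y \<in> PiE S T. P (Y(a := v))})"
proof -
  have fin: "finite (PiE S' T)" if "finite S'" for S' using that assms(3) by (rule finite_PiE)
  have "card {X \<in> PiE (insert a S) T. P X} = (\<Sum>X\<in>PiE (insert a S) T. of_bool (P X))"
    using card_filter_eq_sum[where 'a=nat, OF fin[of "insert a S"], of P] assms(2) by simp
  also have "\<dots> = (\<Sum>v\<in>T a. \<Sum>Y\<in>PiE S T. of_bool (P (Y(a := v))))"
    by (rule sum_PiE_insert[OF assms])
  also have "\<dots> = (\<Sum>v\<in>T a. card {Y \<in> PiE S T. P (Y(a := v))})"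
    using card_filter_eq_sum[where 'a=nat, OF fin[OF assms(2)]] by simp
  finally show ?thesis .
qed

lemma hockey_stick: "(\<Sum>w\<le>M. (w + n) choose n) = (M + Suc n) choose Suc n"
  by (induction M) simp_all

lemma stars_bars:
  "M \<le> N \<Longrightarrow> card {X \<in> PiE {1..n} (\<lambda>_. {0..N::nat}). sum X {1..n} \<le> M} = (M + n) choose n"
proof (induction n arbitrary: M)
  case 0 thus ?case by simp
next
  case (Suc n)
  let ?V = "PiE {1..n} (\<lambda>_. {0..N})"
  have ins: "{1..Suc n} = insert (Suc n) {1..n}" by auto
  have upd: "sum (Y(Suc n := v)) {1..Suc n} = v + sum Y {1..n}" for Y :: "nat \<Rightarrow> nat" and v
  proof -
    have "sum (Y(Suc n := v)) {1..Suc n} = v + sum (Y(Suc n := v)) {1..n}"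
      unfolding ins by (subst sum.insert) auto
    also have "sum (Y(Suc n := v)) {1..n} = sum Y {1..n}" by (rule sum.cong) auto
    finally show ?thesis .
  qed
  have "card {X \<in> PiE {1..Suc n} (\<lambda>_. {0..N}). sum X {1..Suc n} \<le> M}
      = (\<Sum>v\<in>{0..N}. card {Y \<in> ?V. v + sum Y {1..n} \<le> M})"
    unfolding ins by (subst card_PiE_insert_filter) (auto simp: upd[unfolded ins])
  also have "\<dots> = (\<Sum>v\<in>{0..M}. card {Y \<in> ?V. v + sum Y {1..n} \<le> M})"
    by (rule sum.mono_neutral_right) (use Suc.prems in auto)
  also have "\<dots> = (\<Sum>v\<in>{0..M}. card {Y \<in> ?V. sum Y {1..n} \<le> M - v})"
    by (rule sum.cong) (auto intro!: arg_cong[where f=card])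
  also have "\<dots> = (\<Sum>v\<in>{0..M}. (M - v + n) choose n)"
    by (rule sum.cong) (use Suc in auto)
  also have "\<dots> = (\<Sum>w\<in>{0..M}. (w + n) choose n)"
    by (rule sum.reindex_bij_witness[where i="\<lambda>w. M - w" and j="\<lambda>v. M - v"]) auto
  also have "\<dots> = (M + Suc n) choose Suc n" by (simp add: atMost_atLeast0[symmetric] hockey_stick)
  finally show ?case by simp
qed

lemma card_no_carry:
  assumes "n \<ge> 1"
  shows "card {X \<in> digit_vecs n b. (d + b + sum X {1..n}) div (2 * b + 1) = 0} = (n + b - d) choose n"
proof (cases "d \<le> b")
  case True
  have "{X \<in> digit_vecs n b. (d + b + sum X {1..n}) div (2 * b + 1) = 0}
      = {X \<in> PiE {1..n} (\<lambda>_. {0..2 * b}). sum X {1..n} \<le> b - d}"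
    using True by (auto simp: digit_vecs_def div_eq_0_iff)
  also have "card \<dots> = (b - d + n) choose n" by (rule stars_bars) simp
  finally show ?thesis using True by (simp add: add.commute)
next
  case False
  hence "{X \<in> digit_vecs n b. (d + b + sum X {1..n}) div (2 * b + 1) = 0} = {}"
    by (auto simp: div_eq_0_iff)
  moreover have "(n + b - d) choose n = 0" using False \<open>n \<ge> 1\<close> by simp
  ultimately show ?thesis by (simp only: card.empty)
qed

section \<open>The riffle of a uniform labeling is a (2b+1)-shuffle\<close>

definition relabel :: "nat \<Rightarrow> (int \<Rightarrow> int) \<Rightarrow> (nat \<Rightarrow> int) \<Rightarrow> nat \<Rightarrow> int" where
  "relabel n \<rho> h = restrict (\<lambda>k. odd_ext h (\<rho> (int k))) {1..n}"

lemma odd_ext_range: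
  assumes h: "h \<in> labelings n b" and y: "y \<in> ground n"
  shows "odd_ext h y \<in> {- int b..int b}"
proof -
  have "nat \<bar>y\<bar> \<in> {1..n}" using y by auto
  hence "h (nat \<bar>y\<bar>) \<in> {- int b..int b}" using h by (auto simp: labelings_def PiE_iff)
  thus ?thesis using y by (auto simp: odd_ext_def abs_if split: if_splits)
qed

lemma relabel_in: "\<rho> \<in> signed_perms n \<Longrightarrow> h \<in> labelings n b \<Longrightarrow> relabel n \<rho> h \<in> labelings n b"
  unfolding relabel_def using odd_ext_range sperm_in int_in_ground by (auto simp: labelings_def)

lemma relabel_inj:
  assumes \<rho>: "\<rho> \<in> signed_perms n"
  shows "inj_on (relabel n \<rho>) (labelings n b)"
proof (rule inj_onI)
  fix h h' assume h: "h \<in> labelings n b" and h': "h' \<in> labelings n b"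
    and eq: "relabel n \<rho> h = relabel n \<rho> h'"
  have same: "odd_ext h (\<rho> (int k)) = odd_ext h' (\<rho> (int k))" if "k \<in> {1..n}" for k
    using fun_cong[OF eq, of k] that by (simp add: relabel_def)
  show "h = h'"
  proof (rule PiE_ext[OF h[unfolded labelings_def] h'[unfolded labelings_def]])
    fix x assume x: "x \<in> {1..n}"
    define y where "y = inv \<rho> (int x)"
    have y: "y \<in> ground n" unfolding y_def using sperm_in[OF sperm_inv[OF \<rho>] int_in_ground] x by auto
    have "\<rho> y = int x" unfolding y_def using \<rho> by simp
    hence "\<rho> (int (nat \<bar>y\<bar>)) = sgn y * int x" using sperm_odd[OF \<rho>, of y] y by (auto simp: abs_if)
    moreover have "nat \<bar>y\<bar> \<in> {1..n}" using y by auto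
    ultimately have "odd_ext h (sgn y * int x) = odd_ext h' (sgn y * int x)" using same by metis
    thus "h x = h' x" using x y by (auto simp: odd_ext_def sgn_if split: if_splits)
  qed
qed

lemma relabel_image: "\<rho> \<in> signed_perms n \<Longrightarrow> relabel n \<rho> ` labelings n b = labelings n b"
  by (rule card_subset_eq) (auto simp: relabel_in card_image[OF relabel_inj])

lemma card_riffle_bdes:
  assumes n: "n \<ge> 1" and \<rho>: "\<rho> \<in> signed_perms n"
  shows "card {h \<in> labelings n b. bdes n (riffle n h \<circ> \<rho>) = i}
       = card {X \<in> digit_vecs n b. (bdes n \<rho> + b + sum X {1..n}) div (2 * b + 1) = i}"
proof -
  let ?P = "\<lambda>g. card {k \<in> {1..n}. carry_event n g (is_desc n \<rho>) k} = i"
  have events: "carry_event n (relabel n \<rho> h) \<delta> k = carry_event n (\<lambda>k. odd_ext h (\<rho> (int k))) \<delta> k"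
    if "1 \<le> k" for h \<delta> k
    using that unfolding carry_event_def label_ext_def relabel_def by auto
  have "bdes n (riffle n h \<circ> \<rho>) = card {k \<in> {1..n}. carry_event n (relabel n \<rho> h) (is_desc n \<rho>) k}"
    for h unfolding bdes_riffle[OF n \<rho>] by (metis (no_types, lifting) atLeastAtMost_iff events)
  hence by_relabel: "{h \<in> labelings n b. bdes n (riffle n h \<circ> \<rho>) = i} = {h \<in> labelings n b. ?P (relabel n \<rho> h)}"
    by auto
  have reindex: "card {h \<in> labelings n b. ?P (relabel n \<rho> h)}
         = card (relabel n \<rho> ` {h \<in> labelings n b. ?P (relabel n \<rho> h)})"
    by (rule card_image[symmetric]) (rule inj_on_subset[OF relabel_inj[OF \<rho>]], auto)
  have image: "relabel n \<rho> ` {h \<in> labelings n b. ?P (relabel n \<rho> h)} = {g \<in> relabel n \<rho> ` labelings n b. ?P g}"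
    by blast
  have by_digits: "card {g \<in> labelings n b. ?P g}
         = card {X \<in> digit_vecs n b. (bdes n \<rho> + b + sum X {1..n}) div (2 * b + 1) = i}"
    unfolding bdes_eq[OF n] by (rule card_carry_events)
  show ?thesis unfolding by_relabel reindex image relabel_image[OF \<rho>] by_digits ..
qed

text \<open>Exactly C(n+b-d(psi^-1), n) labelings riffle to psi: riffle h = psi iff riffle h o psi^-1
  has no descent.\<close>
lemma card_riffle_fiber:
  assumes n: "n \<ge> 1" and \<psi>: "\<psi> \<in> signed_perms n"
  shows "card {h \<in> labelings n b. riffle n h = \<psi>} = (n + b - bdes n (inv \<psi>)) choose n"
proof -
  have "riffle n h = \<psi> \<longleftrightarrow> bdes n (riffle n h \<circ> inv \<psi>) = 0" for h
  proof
    assume "riffle n h = \<psi>"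
    hence "riffle n h \<circ> inv \<psi> = id" using \<psi> by (auto simp: fun_eq_iff)
    thus "bdes n (riffle n h \<circ> inv \<psi>) = 0" using bdes_id[OF n] by simp
  next
    assume "bdes n (riffle n h \<circ> inv \<psi>) = 0"
    hence "riffle n h \<circ> inv \<psi> = id"
      using bdes_eq_0_imp_id[OF n sperm_comp[OF riffle_sperm sperm_inv[OF \<psi>]]] by simp
    hence "(riffle n h \<circ> inv \<psi>) \<circ> \<psi> = \<psi>" by simp
    thus "riffle n h = \<psi>" using \<psi> by (simp add: fun_eq_iff o_def)
  qed
  hence "{h \<in> labelings n b. riffle n h = \<psi>} = {h \<in> labelings n b. bdes n (riffle n h \<circ> inv \<psi>) = 0}"
    by simp
  thus ?thesis using card_riffle_bdes[OF n sperm_inv[OF \<psi>]] card_no_carry[OF n] by simp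
qed

text \<open>The riffle of a uniformly random labeling has law shuffleB: averaging any F over the
  labelings is taking its expectation under the shuffle measure.\<close>
lemma sum_over_riffles:
  fixes F :: "(int \<Rightarrow> int) \<Rightarrow> real"
  assumes n: "n \<ge> 1"
  shows "(\<Sum>h\<in>labelings n b. F (riffle n h))
       = real (2 * b + 1) ^ n * (\<Sum>\<psi>\<in>signed_perms n. shuffleB n b \<psi> * F \<psi>)"
proof -
  have "(\<Sum>h\<in>labelings n b. F (riffle n h))
      = (\<Sum>\<psi>\<in>signed_perms n. \<Sum>h\<in>{h \<in> labelings n b. riffle n h = \<psi>}. F (riffle n h))"
    by (rule sum.group[symmetric]) (auto simp: riffle_sperm)
  also have "\<dots> = (\<Sum>\<psi>\<in>signed_perms n. real (card {h \<in> labelings n b. riffle n h = \<psi>}) * F \<psi>)"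
    by (rule sum.cong) auto
  also have "\<dots> = (\<Sum>\<psi>\<in>signed_perms n. real (2 * b + 1) ^ n * (shuffleB n b \<psi> * F \<psi>))"
    by (rule sum.cong) (auto simp: card_riffle_fiber[OF n] shuffleB_def)
  finally show ?thesis by (simp add: sum_distrib_left)
qed

lemma shuffleB_total: "n \<ge> 1 \<Longrightarrow> (\<Sum>\<psi>\<in>signed_perms n. shuffleB n b \<psi>) = 1"
  using sum_over_riffles[of n "\<lambda>_. 1" b] by (simp add: card_labelings)

text \<open>Lumpability: after a shuffle psi, the descent number of psi o rho is distributed according to
  the carries chain started at d(rho), whatever rho is.\<close>
lemma descent_transition:
  assumes n: "n \<ge> 1" and \<rho>: "\<rho> \<in> signed_perms n"
  shows "(\<Sum>\<psi>\<in>signed_perms n. shuffleB n b \<psi> * of_bool (bdes n (\<psi> \<circ> \<rho>) = i)) = carriesB n b (bdes n \<rho>) i"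
proof -
  have "real (2 * b + 1) ^ n * (\<Sum>\<psi>\<in>signed_perms n. shuffleB n b \<psi> * of_bool (bdes n (\<psi> \<circ> \<rho>) = i))
      = (\<Sum>h\<in>labelings n b. of_bool (bdes n (riffle n h \<circ> \<rho>) = i))"
    by (rule sum_over_riffles[OF n, symmetric])
  also have "\<dots> = real (card {h \<in> labelings n b. bdes n (riffle n h \<circ> \<rho>) = i})"
    by (rule card_filter_eq_sum[symmetric]) simp
  also have "\<dots> = real (2 * b + 1) ^ n * carriesB n b (bdes n \<rho>) i"
    by (simp add: card_riffle_bdes[OF n \<rho>] carriesB_def digit_vecs_def)
  finally show ?thesis by simp
qed

section \<open>Path weights of the descent process\<close>

lemma shuffle_prod_cong: "(\<forall>i\<in>{1..k}. \<mu> i = \<mu>' i) \<Longrightarrow> shuffle_prod \<mu> k = shuffle_prod \<mu>' k"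
  by (induction k) auto

lemma shuffle_prod_sperm:
  "\<mu> \<in> PiE {1..r} (\<lambda>_. signed_perms n) \<Longrightarrow> k \<le> r \<Longrightarrow> shuffle_prod \<mu> k \<in> signed_perms n"
  by (induction k) (auto simp: sperm_comp PiE_iff)

lemma finite_shuffle_seqs [simp]: "finite (PiE {1..r::nat} (\<lambda>_. signed_perms n))"
  by (rule finite_PiE) auto

lemma sum_sperm_point:
  assumes "x \<in> signed_perms n"
  shows "(\<Sum>\<tau>\<in>signed_perms n. f \<tau> * of_bool (x = \<tau>)) = (f x :: real)"
  using assms by (simp add: of_bool_def sum.delta' if_distrib[of "(*) _"] cong: if_cong)

definition path_cond :: "nat \<Rightarrow> nat \<Rightarrow> (nat \<Rightarrow> nat) \<Rightarrow> (nat \<Rightarrow> int \<Rightarrow> int) \<Rightarrow> bool" where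
  "path_cond n r s \<mu> = (\<forall>k\<le>r. bdes n (inv (shuffle_prod \<mu> k)) = s k)"

definition shuffle_weight :: "nat \<Rightarrow> nat \<Rightarrow> nat \<Rightarrow> (nat \<Rightarrow> int \<Rightarrow> int) \<Rightarrow> real" where
  "shuffle_weight n b r \<mu> = (\<Prod>k\<in>{1..r}. shuffleB n b (\<mu> k))"

definition path_weight :: "nat \<Rightarrow> nat \<Rightarrow> nat \<Rightarrow> (nat \<Rightarrow> nat) \<Rightarrow> (int \<Rightarrow> int) \<Rightarrow> real" where
  "path_weight n b r s \<tau> = (\<Sum>\<mu>\<in>PiE {1..r} (\<lambda>_. signed_perms n).
      shuffle_weight n b r \<mu> * of_bool (path_cond n r s \<mu>) * of_bool (shuffle_prod \<mu> r = \<tau>))"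

lemma sum_path_weight:
  "(\<Sum>\<tau>\<in>signed_perms n. path_weight n b r s \<tau> * f \<tau>)
   = (\<Sum>\<mu>\<in>PiE {1..r} (\<lambda>_. signed_perms n).
        shuffle_weight n b r \<mu> * of_bool (path_cond n r s \<mu>) * f (shuffle_prod \<mu> r))"
proof -
  have "(\<Sum>\<tau>\<in>signed_perms n. path_weight n b r s \<tau> * f \<tau>)
      = (\<Sum>\<mu>\<in>PiE {1..r} (\<lambda>_. signed_perms n). \<Sum>\<tau>\<in>signed_perms n.
           (shuffle_weight n b r \<mu> * of_bool (path_cond n r s \<mu>) * f \<tau>) * of_bool (shuffle_prod \<mu> r = \<tau>))"
    unfolding path_weight_def sum_distrib_right by (subst sum.swap) (simp only: mult_ac)
  also have "\<dots> = (\<Sum>\<mu>\<in>PiE {1..r} (\<lambda>_. signed_perms n).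
                     shuffle_weight n b r \<mu> * of_bool (path_cond n r s \<mu>) * f (shuffle_prod \<mu> r))"
    by (rule sum.cong[OF refl], rule sum_sperm_point, rule shuffle_prod_sperm) auto
  finally show ?thesis .
qed

lemma path_prob_split: "path_prob n b r s = (\<Sum>\<tau>\<in>signed_perms n. path_weight n b r s \<tau>)"
  using sum_path_weight[of n b r s "\<lambda>_. 1"]
  unfolding path_prob_def shuffle_weight_def path_cond_def by (simp add: of_bool_def)

lemma path_weight_0: "n \<ge> 1 \<Longrightarrow> path_weight n b 0 s \<tau> = of_bool (s 0 = 0) * of_bool (\<tau> = id)"
  unfolding path_weight_def shuffle_weight_def path_cond_def using bdes_id by (auto simp: of_bool_def)

lemma path_prob_0: "n \<ge> 1 \<Longrightarrow> path_prob n b 0 s = (if s 0 = 0 then 1 else 0)"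
  unfolding path_prob_def using bdes_id by simp

lemma shuffle_seq_extend:
  assumes Y: "Y \<in> PiE {1..r} (\<lambda>_. signed_perms n)"
  shows "shuffle_prod (Y(Suc r := v)) (Suc r) = shuffle_prod Y r \<circ> v"
    and "shuffle_weight n b (Suc r) (Y(Suc r := v)) = shuffle_weight n b r Y * shuffleB n b v"
    and "path_cond n (Suc r) s (Y(Suc r := v)) \<longleftrightarrow>
           path_cond n r s Y \<and> bdes n (inv (shuffle_prod Y r \<circ> v)) = s (Suc r)"
proof -
  have ins: "{1..Suc r} = insert (Suc r) {1..r}" by auto
  have prefix: "shuffle_prod (Y(Suc r := v)) k = shuffle_prod Y k" if "k \<le> r" for k
    by (rule shuffle_prod_cong) (use that in auto)
  show prod: "shuffle_prod (Y(Suc r := v)) (Suc r) = shuffle_prod Y r \<circ> v"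
    using prefix[of r] by simp
  have "shuffle_weight n b (Suc r) (Y(Suc r := v))
        = shuffleB n b v * (\<Prod>k\<in>{1..r}. shuffleB n b ((Y(Suc r := v)) k))"
    unfolding shuffle_weight_def ins by (subst prod.insert) auto
  also have "(\<Prod>k\<in>{1..r}. shuffleB n b ((Y(Suc r := v)) k)) = shuffle_weight n b r Y"
    unfolding shuffle_weight_def by (rule prod.cong) auto
  finally show "shuffle_weight n b (Suc r) (Y(Suc r := v)) = shuffle_weight n b r Y * shuffleB n b v"
    by (metis mult.commute)
  show "path_cond n (Suc r) s (Y(Suc r := v)) \<longleftrightarrow>
          path_cond n r s Y \<and> bdes n (inv (shuffle_prod Y r \<circ> v)) = s (Suc r)"
    unfolding path_cond_def using prefix prod by (auto simp: le_Suc_eq)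
qed

lemma sum_shuffle_endpoint:
  assumes t: "t \<in> signed_perms n" and \<tau>': "\<tau>' \<in> signed_perms n"
  shows "(\<Sum>v\<in>signed_perms n. shuffleB n b v * of_bool (t \<circ> v = \<tau>')) = shuffleB n b (inv t \<circ> \<tau>')"
proof -
  have "t \<circ> v = \<tau>' \<longleftrightarrow> inv t \<circ> \<tau>' = v" for v
  proof
    assume "t \<circ> v = \<tau>'"
    thus "inv t \<circ> \<tau>' = v" using sperm_comp_inv_cancel[OF t, of v] by simp
  next
    assume "inv t \<circ> \<tau>' = v"
    thus "t \<circ> v = \<tau>'" using sperm_comp_inv_cancel'[OF t, of \<tau>'] by simp
  qed
  hence "(\<Sum>v\<in>signed_perms n. shuffleB n b v * of_bool (t \<circ> v = \<tau>'))
       = (\<Sum>v\<in>signed_perms n. shuffleB n b v * of_bool (inv t \<circ> \<tau>' = v))"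
    by (simp only:)
  also have "\<dots> = shuffleB n b (inv t \<circ> \<tau>')"
    by (rule sum_sperm_point) (rule sperm_comp[OF sperm_inv[OF t] \<tau>'])
  finally show ?thesis .
qed

lemma path_weight_Suc_split:
  "path_weight n b (Suc r) s \<tau>' = (\<Sum>Y\<in>PiE {1..r} (\<lambda>_. signed_perms n).
      shuffle_weight n b r Y * of_bool (path_cond n r s Y) * (\<Sum>v\<in>signed_perms n.
        shuffleB n b v * of_bool (bdes n (inv \<tau>') = s (Suc r)) * of_bool (shuffle_prod Y r \<circ> v = \<tau>')))"
proof -
  let ?B = "signed_perms n" and ?P = "PiE {1..r} (\<lambda>_. signed_perms n)"
  let ?c = "of_bool (bdes n (inv \<tau>') = s (Suc r)) :: real"
  let ?W = "\<lambda>Y. shuffle_weight n b r Y * of_bool (path_cond n r s Y)"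
  have "{1..Suc r} = insert (Suc r) {1..r}" by auto
  hence "path_weight n b (Suc r) s \<tau>' = (\<Sum>v\<in>?B. \<Sum>Y\<in>?P.
      shuffle_weight n b (Suc r) (Y(Suc r := v)) * of_bool (path_cond n (Suc r) s (Y(Suc r := v)))
      * of_bool (shuffle_prod (Y(Suc r := v)) (Suc r) = \<tau>'))"
    unfolding path_weight_def by (simp only:) (rule sum_PiE_insert, auto)
  also have "\<dots> = (\<Sum>v\<in>?B. \<Sum>Y\<in>?P. ?W Y * (shuffleB n b v * ?c * of_bool (shuffle_prod Y r \<circ> v = \<tau>')))"
  proof (intro sum.cong refl)
    fix v Y assume Y: "Y \<in> ?P"
    show "shuffle_weight n b (Suc r) (Y(Suc r := v)) * of_bool (path_cond n (Suc r) s (Y(Suc r := v)))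
        * of_bool (shuffle_prod (Y(Suc r := v)) (Suc r) = \<tau>')
        = ?W Y * (shuffleB n b v * ?c * of_bool (shuffle_prod Y r \<circ> v = \<tau>'))"
      unfolding shuffle_seq_extend[OF Y] by (auto simp: of_bool_def)
  qed
  also have "\<dots> = (\<Sum>Y\<in>?P. \<Sum>v\<in>?B. ?W Y * (shuffleB n b v * ?c * of_bool (shuffle_prod Y r \<circ> v = \<tau>')))"
    by (rule sum.swap)
  finally show ?thesis by (simp only: sum_distrib_left)
qed

lemma path_weight_Suc:
  assumes \<tau>': "\<tau>' \<in> signed_perms n"
  shows "path_weight n b (Suc r) s \<tau>' = of_bool (bdes n (inv \<tau>') = s (Suc r)) *
     (\<Sum>\<tau>\<in>signed_perms n. path_weight n b r s \<tau> * shuffleB n b (inv \<tau> \<circ> \<tau>'))"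
proof -
  let ?P = "PiE {1..r} (\<lambda>_. signed_perms n)"
  let ?c = "of_bool (bdes n (inv \<tau>') = s (Suc r)) :: real"
  let ?W = "\<lambda>Y. shuffle_weight n b r Y * of_bool (path_cond n r s Y)"
  have "(\<Sum>v\<in>signed_perms n. shuffleB n b v * ?c * of_bool (shuffle_prod Y r \<circ> v = \<tau>'))
        = ?c * shuffleB n b (inv (shuffle_prod Y r) \<circ> \<tau>')" if Y: "Y \<in> ?P" for Y
    using sum_shuffle_endpoint[OF shuffle_prod_sperm[OF Y order.refl] \<tau>', of b]
    by (simp add: sum_distrib_left[symmetric] mult_ac)
  hence "path_weight n b (Suc r) s \<tau>' = (\<Sum>Y\<in>?P. ?c * (?W Y * shuffleB n b (inv (shuffle_prod Y r) \<circ> \<tau>')))"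
    unfolding path_weight_Suc_split by (intro sum.cong refl) (simp add: mult_ac)
  also have "\<dots> = ?c * (\<Sum>\<tau>\<in>signed_perms n. path_weight n b r s \<tau> * shuffleB n b (inv \<tau> \<circ> \<tau>'))"
    unfolding sum_path_weight by (simp only: sum_distrib_left)
  finally show ?thesis .
qed

section \<open>The descent process is a Markov chain\<close>

lemma eulerB_pos_witness:
  assumes "\<sigma> \<in> signed_perms n" "bdes n \<sigma> = j"
  shows "eulerB n j > 0"
proof -
  have "{\<sigma> \<in> signed_perms n. bdes n \<sigma> = j} \<noteq> {}" using assms by blast
  thus ?thesis unfolding eulerB_def by (simp add: card_gt_0_iff)
qed

lemma eulerB_0: "n \<ge> 1 \<Longrightarrow> eulerB n 0 = 1"
proof -
  assume n: "n \<ge> 1"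
  have "{\<sigma> \<in> signed_perms n. bdes n \<sigma> = 0} = {id}" using bdes_eq_0_imp_id[OF n] bdes_id[OF n] by auto
  thus ?thesis unfolding eulerB_def by simp
qed

lemma sum_level_indicator:
  "(\<Sum>\<tau>\<in>signed_perms n. (of_bool (bdes n (inv \<tau>) = j) :: real)) = real (eulerB n j)"
proof -
  have "(\<Sum>\<tau>\<in>signed_perms n. (of_bool (bdes n (inv \<tau>) = j) :: real))
      = (\<Sum>\<sigma>\<in>signed_perms n. of_bool (bdes n \<sigma> = j))"
    by (rule sum.reindex_bij_witness[where i=inv and j=inv]) (auto simp: sperm_inv)
  also have "\<dots> = real (eulerB n j)"
    unfolding eulerB_def by (rule card_filter_eq_sum[symmetric]) simp
  finally show ?thesis .
qed

lemma level_transition: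
  assumes n: "n \<ge> 1" and \<tau>': "\<tau>' \<in> signed_perms n"
  shows "(\<Sum>\<tau>\<in>signed_perms n. of_bool (bdes n (inv \<tau>) = i) * shuffleB n b (inv \<tau> \<circ> \<tau>'))
       = carriesB n b (bdes n (inv \<tau>')) i"
proof -
  have inv_shift: "inv (\<tau>' \<circ> inv \<psi>) = \<psi> \<circ> inv \<tau>'" if "\<psi> \<in> signed_perms n" for \<psi>
    using sperm_inv_comp[OF \<tau>' sperm_inv[OF that]] that by simp
  have "(\<Sum>\<tau>\<in>signed_perms n. of_bool (bdes n (inv \<tau>) = i) * shuffleB n b (inv \<tau> \<circ> \<tau>'))
      = (\<Sum>\<psi>\<in>signed_perms n. shuffleB n b \<psi> * of_bool (bdes n (\<psi> \<circ> inv \<tau>') = i))"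
  proof (rule sum.reindex_bij_witness[where i="\<lambda>\<psi>. \<tau>' \<circ> inv \<psi>" and j="\<lambda>\<tau>. inv \<tau> \<circ> \<tau>'"])
    fix \<tau> assume \<tau>: "\<tau> \<in> signed_perms n"
    show "inv \<tau> \<circ> \<tau>' \<in> signed_perms n" by (rule sperm_comp[OF sperm_inv[OF \<tau>] \<tau>'])
    show "\<tau>' \<circ> inv (inv \<tau> \<circ> \<tau>') = \<tau>"
      using sperm_inv_comp[OF sperm_inv[OF \<tau>] \<tau>'] \<tau> \<tau>' by (simp add: fun_eq_iff)
    have "(inv \<tau> \<circ> \<tau>') \<circ> inv \<tau>' = inv \<tau>" using \<tau>' by (simp add: fun_eq_iff)
    thus "shuffleB n b (inv \<tau> \<circ> \<tau>') * of_bool (bdes n ((inv \<tau> \<circ> \<tau>') \<circ> inv \<tau>') = i)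
        = of_bool (bdes n (inv \<tau>) = i) * shuffleB n b (inv \<tau> \<circ> \<tau>')"
      by simp
  next
    fix \<psi> assume \<psi>: "\<psi> \<in> signed_perms n"
    show "\<tau>' \<circ> inv \<psi> \<in> signed_perms n" by (rule sperm_comp[OF \<tau>' sperm_inv[OF \<psi>]])
    show "inv (\<tau>' \<circ> inv \<psi>) \<circ> \<tau>' = \<psi>" using inv_shift[OF \<psi>] \<tau>' by (simp add: fun_eq_iff)
  qed
  also have "\<dots> = carriesB n b (bdes n (inv \<tau>')) i"
    by (rule descent_transition[OF n sperm_inv[OF \<tau>']])
  finally show ?thesis .
qed

lemma path_weight_step:
  assumes n: "n \<ge> 1"
    and uniform: "\<And>\<tau>. \<tau> \<in> signed_perms n \<Longrightarrow> path_weight n b r s \<tau> = of_bool (bdes n (inv \<tau>) = s r) * c"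
    and \<tau>': "\<tau>' \<in> signed_perms n"
  shows "path_weight n b (Suc r) s \<tau>'
           = of_bool (bdes n (inv \<tau>') = s (Suc r)) * (c * carriesB n b (s (Suc r)) (s r))"
proof -
  have "(\<Sum>\<tau>\<in>signed_perms n. path_weight n b r s \<tau> * shuffleB n b (inv \<tau> \<circ> \<tau>'))
      = c * (\<Sum>\<tau>\<in>signed_perms n. of_bool (bdes n (inv \<tau>) = s r) * shuffleB n b (inv \<tau> \<circ> \<tau>'))"
    unfolding sum_distrib_left by (rule sum.cong) (simp_all add: uniform)
  also have "\<dots> = c * carriesB n b (bdes n (inv \<tau>')) (s r)"
    by (simp only: level_transition[OF n \<tau>'])
  finally show ?thesis using path_weight_Suc[OF \<tau>', of b r s] by simp
qed

lemma path_prob_uniform: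
  assumes "\<And>\<tau>. \<tau> \<in> signed_perms n \<Longrightarrow> path_weight n b r s \<tau> = of_bool (bdes n (inv \<tau>) = j) * c"
  shows "path_prob n b r s = real (eulerB n j) * c"
proof -
  have "path_prob n b r s = (\<Sum>\<tau>\<in>signed_perms n. of_bool (bdes n (inv \<tau>) = j)) * c"
    unfolding path_prob_split by (simp add: assms sum_distrib_right)
  thus ?thesis by (simp only: sum_level_indicator)
qed

text \<open>Main invariant: given the descent path, tau_r is uniformly distributed on its descent class.\<close>
lemma path_weight_uniform:
  assumes n: "n \<ge> 1" and \<tau>: "\<tau> \<in> signed_perms n"
  shows "path_weight n b r s \<tau> = of_bool (bdes n (inv \<tau>) = s r) * (path_prob n b r s / real (eulerB n (s r)))"
  using \<tau>
proof (induction r arbitrary: \<tau>)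
  case 0
  have "bdes n (inv \<tau>) = 0 \<longleftrightarrow> \<tau> = id"
  proof
    assume "bdes n (inv \<tau>) = 0"
    hence "inv \<tau> = id" using bdes_eq_0_imp_id[OF n sperm_inv[OF "0.prems"]] by simp
    thus "\<tau> = id" using sperm_inv_inv[OF "0.prems"] by (metis inv_id)
  qed (use bdes_id[OF n] in simp)
  thus ?case using path_weight_0[OF n] path_prob_0[OF n] eulerB_0[OF n] by simp
next
  case (Suc r)
  let ?j = "s (Suc r)" and ?c = "path_prob n b r s / real (eulerB n (s r)) * carriesB n b (s (Suc r)) (s r)"
  have step: "path_weight n b (Suc r) s \<tau>' = of_bool (bdes n (inv \<tau>') = ?j) * ?c"
    if "\<tau>' \<in> signed_perms n" for \<tau>'
    by (rule path_weight_step[OF n Suc.IH that])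
  show ?case
  proof (cases "bdes n (inv \<tau>) = ?j")
    case True
    hence "eulerB n ?j > 0" using eulerB_pos_witness[OF sperm_inv[OF Suc.prems]] by blast
    thus ?thesis using step[OF Suc.prems] path_prob_uniform[of n b "Suc r" s ?j ?c] step True by simp
  qed (simp add: step[OF Suc.prems])
qed

lemma path_prob_Suc:
  assumes n: "n \<ge> 1"
  shows "path_prob n b (Suc r) s = real (eulerB n (s (Suc r))) * (path_prob n b r s / real (eulerB n (s r)))
                                     * carriesB n b (s (Suc r)) (s r)"
proof -
  let ?c = "path_prob n b r s / real (eulerB n (s r))"
  have "path_weight n b (Suc r) s \<tau>' = of_bool (bdes n (inv \<tau>') = s (Suc r)) * (?c * carriesB n b (s (Suc r)) (s r))"
    if "\<tau>' \<in> signed_perms n" for \<tau>'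
    by (rule path_weight_step[OF n path_weight_uniform[OF n] that])
  hence "path_prob n b (Suc r) s = real (eulerB n (s (Suc r))) * (?c * carriesB n b (s (Suc r)) (s r))"
    by (rule path_prob_uniform)
  thus ?thesis by (simp only: mult.assoc)
qed

section \<open>The stationary distribution and the time reversal\<close>

lemma sum_card_fibers:
  assumes "finite S" "\<And>x. x \<in> S \<Longrightarrow> f x \<le> (n::nat)"
  shows "(\<Sum>i\<le>n. card {x \<in> S. f x = i}) = card S"
proof -
  have "(\<Sum>i\<le>n. \<Sum>x\<in>{x \<in> S. f x = i}. (1::nat)) = (\<Sum>x\<in>S. 1)"
    by (rule sum.group) (use assms in auto)
  thus ?thesis by simp
qed

lemma sum_eulerB: "n \<ge> 1 \<Longrightarrow> (\<Sum>j\<le>n. eulerB n j) = 2 ^ n * fact n"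
  unfolding eulerB_def card_signed_perms[symmetric] by (rule sum_card_fibers) (auto simp: bdes_le)

definition flip_top :: "nat \<Rightarrow> nat \<Rightarrow> int \<Rightarrow> int" where
  "flip_top n i x = (if x \<in> ground n \<and> \<bar>x\<bar> > int n - int i then - x else x)"

text \<open>flip_top n i realises every descent number i <= n, so pi has full support on {0..n}.\<close>
lemma flip_top_sperm: "flip_top n i \<in> signed_perms n"
proof (rule sperm_intro)
  have "flip_top n i (flip_top n i x) = x" for x by (auto simp: flip_top_def)
  thus "inj_on (flip_top n i) (ground n)" by (rule inj_on_inverseI)
qed (auto simp: flip_top_def)

lemma bdes_flip_top:
  assumes n: "n \<ge> 1" and i: "i \<le> n"
  shows "bdes n (flip_top n i) = i"
proof -
  have "is_desc n (flip_top n i) k \<longleftrightarrow> n - i + 1 \<le> k" if k: "1 \<le> k" "k \<le> n" for k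
  proof (cases "k < n")
    case True
    thus ?thesis using k i by (auto simp: is_desc_def flip_top_def brank_def)
  next
    case False
    thus ?thesis using k i n by (auto simp: is_desc_def flip_top_def)
  qed
  hence "{k \<in> {1..n}. is_desc n (flip_top n i) k} = {n - i + 1..n}" using i by auto
  thus ?thesis using i by (simp add: bdes_eq[OF n])
qed

lemma eulerB_pos: "n \<ge> 1 \<Longrightarrow> i \<le> n \<Longrightarrow> eulerB n i > 0"
  using eulerB_pos_witness[OF flip_top_sperm bdes_flip_top] by blast

lemma piB_pos: "n \<ge> 1 \<Longrightarrow> i \<le> n \<Longrightarrow> piB n i > 0"
  unfolding piB_def using eulerB_pos by simp

lemma piB_sum: "n \<ge> 1 \<Longrightarrow> (\<Sum>j\<le>n. piB n j) = 1"
proof -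
  assume "n \<ge> 1"
  hence "(\<Sum>j\<le>n. real (eulerB n j)) = 2 ^ n * fact n"
    using arg_cong[OF sum_eulerB, of n real] by simp
  thus ?thesis unfolding piB_def sum_divide_distrib[symmetric] by simp
qed

lemma carriesB_row_sum:
  assumes j: "j \<le> n"
  shows "(\<Sum>i\<le>n. carriesB n b j i) = 1"
proof -
  have bound: "(j + b + sum X {1..n}) div (2 * b + 1) \<le> n" if X: "X \<in> digit_vecs n b" for X
  proof -
    have "sum X {1..n} \<le> of_nat (card {1..n}) * (2 * b)"
      by (rule sum_bounded_above) (use X in \<open>auto simp: digit_vecs_def PiE_iff\<close>)
    hence "j + b + sum X {1..n} < Suc n * (2 * b + 1)" using j by (simp add: algebra_simps)
    hence "(j + b + sum X {1..n}) div (2 * b + 1) < Suc n" by (rule less_mult_imp_div_less)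
    thus ?thesis by simp
  qed
  have "(\<Sum>i\<le>n. card {X \<in> digit_vecs n b. (j + b + sum X {1..n}) div (2 * b + 1) = i})
        = card (digit_vecs n b)"
    by (rule sum_card_fibers) (use bound in auto)
  hence "real (\<Sum>i\<le>n. card {X \<in> digit_vecs n b. (j + b + sum X {1..n}) div (2 * b + 1) = i})
        = real (2 * b + 1) ^ n"
    by (simp add: card_digit_vecs)
  thus ?thesis by (simp add: carriesB_def digit_vecs_def sum_divide_distrib[symmetric])
qed

lemma eulerB_carriesB_balance:
  assumes n: "n \<ge> 1"
  shows "(\<Sum>j\<le>n. real (eulerB n j) * carriesB n b j i) = real (eulerB n i)"
proof -
  let ?B = "signed_perms n"
  have "(\<Sum>j\<le>n. real (eulerB n j) * carriesB n b j i)
      = (\<Sum>j\<le>n. \<Sum>\<rho>\<in>{\<rho> \<in> ?B. bdes n \<rho> = j}. carriesB n b (bdes n \<rho>) i)"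
    by (rule sum.cong) (simp_all add: eulerB_def)
  also have "\<dots> = (\<Sum>\<rho>\<in>?B. carriesB n b (bdes n \<rho>) i)"
    by (rule sum.group) (auto simp: bdes_le[OF n])
  also have "\<dots> = (\<Sum>\<rho>\<in>?B. \<Sum>\<psi>\<in>?B. shuffleB n b \<psi> * of_bool (bdes n (\<psi> \<circ> \<rho>) = i))"
    by (rule sum.cong[OF refl], rule descent_transition[OF n, symmetric])
  also have "\<dots> = (\<Sum>\<psi>\<in>?B. shuffleB n b \<psi> * (\<Sum>\<rho>\<in>?B. of_bool (bdes n (\<psi> \<circ> \<rho>) = i)))"
    by (subst sum.swap) (simp only: sum_distrib_left)
  also have "\<dots> = (\<Sum>\<psi>\<in>?B. shuffleB n b \<psi> * real (eulerB n i))"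
  proof (rule sum.cong[OF refl])
    fix \<psi> assume \<psi>: "\<psi> \<in> ?B"
    have "(\<Sum>\<rho>\<in>?B. (of_bool (bdes n (\<psi> \<circ> \<rho>) = i) :: real)) = (\<Sum>\<sigma>\<in>?B. of_bool (bdes n \<sigma> = i))"
      by (rule sum.reindex_bij_witness[where i="\<lambda>\<sigma>. inv \<psi> \<circ> \<sigma>" and j="\<lambda>\<rho>. \<psi> \<circ> \<rho>"])
         (use \<psi> in \<open>auto simp: sperm_comp sperm_inv sperm_comp_inv_cancel sperm_comp_inv_cancel'\<close>)
    also have "\<dots> = real (eulerB n i)"
      unfolding eulerB_def by (rule card_filter_eq_sum[symmetric]) simp
    finally show "shuffleB n b \<psi> * (\<Sum>\<rho>\<in>?B. of_bool (bdes n (\<psi> \<circ> \<rho>) = i)) = shuffleB n b \<psi> * real (eulerB n i)"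
      by simp
  qed
  also have "\<dots> = real (eulerB n i)"
    by (simp add: sum_distrib_right[symmetric] shuffleB_total[OF n])
  finally show ?thesis .
qed

lemma reversed_markov:
  assumes n: "n \<ge> 1"
  shows "path_prob n b (Suc r) s
       = path_prob n b r s * (piB n (s (Suc r)) * carriesB n b (s (Suc r)) (s r) / piB n (s r))"
  unfolding path_prob_Suc[OF n] piB_def by (simp add: field_simps)

text \<open>K is stochastic, by the balance equation.\<close>
lemma reversed_row_sum:
  assumes n: "n \<ge> 1" and i: "i \<le> n"
  shows "(\<Sum>j\<le>n. piB n j * carriesB n b j i / piB n i) = 1"
proof -
  have "(\<Sum>j\<le>n. piB n j * carriesB n b j i / piB n i)
        = (\<Sum>j\<le>n. real (eulerB n j) * carriesB n b j i) / real (eulerB n i)"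
    unfolding piB_def sum_divide_distrib by (rule sum.cong) simp_all
  thus ?thesis using eulerB_carriesB_balance[OF n] eulerB_pos[OF n i] by simp
qed

text \<open>pi is stationary for K, by the row sums of the carries chain.\<close>
lemma reversed_stationary:
  assumes n: "n \<ge> 1" and j: "j \<le> n"
  shows "(\<Sum>i\<le>n. piB n i * (piB n j * carriesB n b j i / piB n i)) = piB n j"
proof -
  have "(\<Sum>i\<le>n. piB n i * (piB n j * carriesB n b j i / piB n i)) = (\<Sum>i\<le>n. piB n j * carriesB n b j i)"
  proof (rule sum.cong[OF refl])
    fix i assume "i \<in> {..n}"
    hence "piB n i > 0" using piB_pos[OF n] by simp
    thus "piB n i * (piB n j * carriesB n b j i / piB n i) = piB n j * carriesB n b j i" by simp
  qed
  thus ?thesis by (simp add: sum_distrib_left[symmetric] carriesB_row_sum[OF j])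
qed

theorem theorem4p3:
  fixes n b :: nat
  assumes "n \<ge> 1" and "b \<ge> 1"
  defines "K \<equiv> (\<lambda>i j. piB n j * carriesB n b j i / piB n i)"
  shows "(\<forall>r s. path_prob n b (Suc r) s = path_prob n b r s * K (s r) (s (Suc r)))
       \<and> (\<forall>s. path_prob n b 0 s = (if s 0 = 0 then 1 else 0))
       \<and> (\<forall>i\<le>n. (\<Sum>j\<le>n. K i j) = 1)
       \<and> (\<Sum>j\<le>n. piB n j) = 1
       \<and> (\<forall>j\<le>n. (\<Sum>i\<le>n. piB n i * K i j) = piB n j)"
  unfolding K_def
  using reversed_markov path_prob_0 reversed_row_sum piB_sum reversed_stationary \<open>n \<ge> 1\<close>
  by blast

end
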